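(* Let $T$ be a complete theory with monster model $\mathcal{U}$, $\mu\in\mathfrak{M}_x(\mathcal{U})$, $\nu\in\mathfrak{M}_y(\mathcal{U})$. If $\mu\geq_{\mathbb{E}}\nu$ and $\mu$ is smooth, then $\nu$ is smooth.
   Context: For $C\subseteq\mathcal{U}$, $\mathcal{L}_x(C)$ is the Boolean algebra of formulas in $x$ with parameters from $C$ modulo $T$, embedded in $\mathcal{L}_{xy}(C)$ via $\varphi(x)\mapsto\varphi(x)\wedge y=y$; $\mathfrak{M}_x(C)$ is the set of finitely additive probability measures on $\mathcal{L}_x(C)$. For $\omega\in\mathfrak{M}_{xy}(C)$, $\pi_x(\omega)(\varphi(x))=\omega(\varphi(x)\wedge y=y)$ (similarly $\pi_y$); $\omega|_D$ is restriction. For small $A$, $\mu\geq_{\mathbb{E},A}\nu$ means there is $\lambda\in\mathfrak{M}_{xy}(A)$ with $\pi_x(\lambda)=\mu|_A$ such that every $\omega\in\mathfrak{M}_{xy}(\mathcal{U})$ with $\omega|_A=\lambda$ and $\pi_x(\omega)=\mu$ satisfies $\pi_y(\omega)=\nu$; $\mu\geq_{\mathbb{E}}\nu$ means this for some small $A$. A global measure is smooth over $A$ if it is the unique global measure (in its variables) with its restriction to $A$; it is smooth if smooth over some small $A$. *)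

theory Defs
  imports Complex_Main
begin

text \<open>A first-order language with relation symbols of type 'r and function symbols
of type 'f (arities are implicit: a symbol may be applied to argument lists of any
length, which is equivalent to having one symbol per arity).  Terms and formulas
may contain parameters (elements of type 'a, the carrier type of the structure).\<close>

datatype ('f, 'a) trm = Var nat | Par 'a | Fn 'f "('f, 'a) trm list"

datatype ('r, 'f, 'a) fm =
    Eq "('f, 'a) trm" "('f, 'a) trm"
  | Rl 'r "('f, 'a) trm list"
  | Neg "('r, 'f, 'a) fm"
  | Conj "('r, 'f, 'a) fm" "('r, 'f, 'a) fm"
  | Ex nat "('r, 'f, 'a) fm"

fun tparams :: "('f, 'a) trm \<Rightarrow> 'a set" where
  "tparams (Var i) = {}"
| "tparams (Par a) = {a}"
| "tparams (Fn f ts) = (\<Union>t\<in>set ts. tparams t)"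

fun tvars :: "('f, 'a) trm \<Rightarrow> nat set" where
  "tvars (Var i) = {i}"
| "tvars (Par a) = {}"
| "tvars (Fn f ts) = (\<Union>t\<in>set ts. tvars t)"

fun params :: "('r, 'f, 'a) fm \<Rightarrow> 'a set" where
  "params (Eq s t) = tparams s \<union> tparams t"
| "params (Rl r ts) = (\<Union>t\<in>set ts. tparams t)"
| "params (Neg p) = params p"
| "params (Conj p q) = params p \<union> params q"
| "params (Ex i p) = params p"

fun fv :: "('r, 'f, 'a) fm \<Rightarrow> nat set" where
  "fv (Eq s t) = tvars s \<union> tvars t"
| "fv (Rl r ts) = (\<Union>t\<in>set ts. tvars t)"
| "fv (Neg p) = fv p"
| "fv (Conj p q) = fv p \<union> fv q"
| "fv (Ex i p) = fv p - {i}"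

fun evt :: "('f \<Rightarrow> 'a list \<Rightarrow> 'a) \<Rightarrow> (nat \<Rightarrow> 'a) \<Rightarrow> ('f, 'a) trm \<Rightarrow> 'a" where
  "evt fn e (Var i) = e i"
| "evt fn e (Par a) = a"
| "evt fn e (Fn f ts) = fn f (map (evt fn e) ts)"

fun sat :: "'a set \<Rightarrow> ('r \<Rightarrow> 'a list \<Rightarrow> bool) \<Rightarrow> ('f \<Rightarrow> 'a list \<Rightarrow> 'a)
            \<Rightarrow> (nat \<Rightarrow> 'a) \<Rightarrow> ('r, 'f, 'a) fm \<Rightarrow> bool" where
  "sat U rel fn e (Eq s t) = (evt fn e s = evt fn e t)"
| "sat U rel fn e (Rl r ts) = rel r (map (evt fn e) ts)"
| "sat U rel fn e (Neg p) = (\<not> sat U rel fn e p)"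
| "sat U rel fn e (Conj p q) = (sat U rel fn e p \<and> sat U rel fn e q)"
| "sat U rel fn e (Ex i p) = (\<exists>a\<in>U. sat U rel fn (e(i := a)) p)"

definition is_structure :: "'a set \<Rightarrow> ('f \<Rightarrow> 'a list \<Rightarrow> 'a) \<Rightarrow> bool" where
  "is_structure U fn \<longleftrightarrow> U \<noteq> {} \<and> (\<forall>f xs. set xs \<subseteq> U \<longrightarrow> fn f xs \<in> U)"

definition small :: "'k rel \<Rightarrow> 'a set \<Rightarrow> 'a set \<Rightarrow> bool" where
  "small \<kappa> U A \<longleftrightarrow> A \<subseteq> U \<and> (card_of A, \<kappa>) \<in> ordLess"

definition saturated ::
  "'k rel \<Rightarrow> 'a set \<Rightarrow> ('r \<Rightarrow> 'a list \<Rightarrow> bool) \<Rightarrow> ('f \<Rightarrow> 'a list \<Rightarrow> 'a) \<Rightarrow> bool" where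
  "saturated \<kappa> U rel fn \<longleftrightarrow>
     (\<forall>A (p :: ('r, 'f, 'a) fm set). small \<kappa> U A
        \<and> (\<forall>\<phi>\<in>p. params \<phi> \<subseteq> A \<and> fv \<phi> \<subseteq> {0})
        \<and> (\<forall>F. F \<subseteq> p \<and> finite F \<longrightarrow> (\<exists>a\<in>U. \<forall>\<phi>\<in>F. sat U rel fn (\<lambda>_. a) \<phi>))
        \<longrightarrow> (\<exists>a\<in>U. \<forall>\<phi>\<in>p. sat U rel fn (\<lambda>_. a) \<phi>))"

definition automorphism ::
  "'a set \<Rightarrow> ('r \<Rightarrow> 'a list \<Rightarrow> bool) \<Rightarrow> ('f \<Rightarrow> 'a list \<Rightarrow> 'a) \<Rightarrow> ('a \<Rightarrow> 'a) \<Rightarrow> bool" where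
  "automorphism U rel fn \<sigma> \<longleftrightarrow> bij_betw \<sigma> U U
     \<and> (\<forall>r xs. set xs \<subseteq> U \<longrightarrow> rel r (map \<sigma> xs) = rel r xs)
     \<and> (\<forall>f xs. set xs \<subseteq> U \<longrightarrow> fn f (map \<sigma> xs) = \<sigma> (fn f xs))"

definition elementary_on ::
  "'a set \<Rightarrow> ('r \<Rightarrow> 'a list \<Rightarrow> bool) \<Rightarrow> ('f \<Rightarrow> 'a list \<Rightarrow> 'a) \<Rightarrow> 'a set \<Rightarrow> ('a \<Rightarrow> 'a) \<Rightarrow> bool" where
  "elementary_on U rel fn A g \<longleftrightarrow> g ` A \<subseteq> U \<and>
     (\<forall>(\<phi> :: ('r, 'f, 'a) fm) e. params \<phi> = {} \<and> range e \<subseteq> A \<longrightarrow>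
        (sat U rel fn e \<phi> \<longleftrightarrow> sat U rel fn (g \<circ> e) \<phi>))"

definition strongly_homogeneous ::
  "'k rel \<Rightarrow> 'a set \<Rightarrow> ('r \<Rightarrow> 'a list \<Rightarrow> bool) \<Rightarrow> ('f \<Rightarrow> 'a list \<Rightarrow> 'a) \<Rightarrow> bool" where
  "strongly_homogeneous \<kappa> U rel fn \<longleftrightarrow>
     (\<forall>A g. small \<kappa> U A \<and> elementary_on U rel fn A g \<longrightarrow>
        (\<exists>\<sigma>. automorphism U rel fn \<sigma> \<and> (\<forall>a\<in>A. \<sigma> a = g a)))"

definition monster ::
  "'k rel \<Rightarrow> 'a set \<Rightarrow> ('r \<Rightarrow> 'a list \<Rightarrow> bool) \<Rightarrow> ('f \<Rightarrow> 'a list \<Rightarrow> 'a) \<Rightarrow> bool" where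
  "monster \<kappa> U rel fn \<longleftrightarrow>
     Card_order \<kappa> \<and> (natLeq, \<kappa>) \<in> ordLeq \<and> (card_of (UNIV :: 'r set), \<kappa>) \<in> ordLess
     \<and> (card_of (UNIV :: 'f set), \<kappa>) \<in> ordLess
     \<and> is_structure U fn \<and> saturated \<kappa> U rel fn \<and> strongly_homogeneous \<kappa> U rel fn"

definition tuples :: "'a set \<Rightarrow> nat \<Rightarrow> 'a list set" where
  "tuples U n = {v. length v = n \<and> set v \<subseteq> U}"

definition dset ::
  "'a set \<Rightarrow> ('r \<Rightarrow> 'a list \<Rightarrow> bool) \<Rightarrow> ('f \<Rightarrow> 'a list \<Rightarrow> 'a) \<Rightarrow> nat \<Rightarrow> ('r, 'f, 'a) fm \<Rightarrow> 'a list set" where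
  "dset U rel fn n \<phi> = {v \<in> tuples U n. sat U rel fn (\<lambda>i. v ! i) \<phi>}"

text \<open>L_x(C) for |x| = n: formulas in x with parameters from C modulo T, represented by
the subsets of U^n they define (in the monster model, equivalence modulo T coincides
with defining the same set).\<close>
definition LL ::
  "'a set \<Rightarrow> ('r \<Rightarrow> 'a list \<Rightarrow> bool) \<Rightarrow> ('f \<Rightarrow> 'a list \<Rightarrow> 'a) \<Rightarrow> 'a set \<Rightarrow> nat \<Rightarrow> 'a list set set" where
  "LL U rel fn C n = {dset U rel fn n \<phi> | \<phi>. params \<phi> \<subseteq> C \<and> fv \<phi> \<subseteq> {..<n}}"

text \<open>Finitely additive probability measures on a Boolean algebra B of subsets of S,
normalised to be 0 outside B (so that measures on B are plain functions).\<close>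
definition fa_prob :: "'b set set \<Rightarrow> 'b set \<Rightarrow> ('b set \<Rightarrow> real) \<Rightarrow> bool" where
  "fa_prob B S \<mu> \<longleftrightarrow> \<mu> S = 1 \<and> (\<forall>D\<in>B. 0 \<le> \<mu> D)
     \<and> (\<forall>D\<in>B. \<forall>E\<in>B. D \<inter> E = {} \<longrightarrow> \<mu> (D \<union> E) = \<mu> D + \<mu> E)
     \<and> (\<forall>D. D \<notin> B \<longrightarrow> \<mu> D = 0)"

definition MM ::
  "'a set \<Rightarrow> ('r \<Rightarrow> 'a list \<Rightarrow> bool) \<Rightarrow> ('f \<Rightarrow> 'a list \<Rightarrow> 'a) \<Rightarrow> 'a set \<Rightarrow> nat \<Rightarrow> ('a list set \<Rightarrow> real) set" where
  "MM U rel fn C n = {\<mu>. fa_prob (LL U rel fn C n) (tuples U n) \<mu>}"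

definition restr :: "'b set set \<Rightarrow> ('b set \<Rightarrow> real) \<Rightarrow> 'b set \<Rightarrow> real" where
  "restr B \<mu> = (\<lambda>D. if D \<in> B then \<mu> D else 0)"

text \<open>Variables: x = first n coordinates, y = last m coordinates of xy (length n+m).
The embeddings phi(x) |-> phi(x) /\ y = y and psi(y) |-> x = x /\ psi(y).\<close>
definition ext_x :: "'a set \<Rightarrow> nat \<Rightarrow> nat \<Rightarrow> 'a list set \<Rightarrow> 'a list set" where
  "ext_x U n m D = {v \<in> tuples U (n + m). take n v \<in> D}"

definition ext_y :: "'a set \<Rightarrow> nat \<Rightarrow> nat \<Rightarrow> 'a list set \<Rightarrow> 'a list set" where
  "ext_y U n m D = {v \<in> tuples U (n + m). drop n v \<in> D}"

definition pi_x ::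
  "'a set \<Rightarrow> ('r \<Rightarrow> 'a list \<Rightarrow> bool) \<Rightarrow> ('f \<Rightarrow> 'a list \<Rightarrow> 'a) \<Rightarrow> 'a set \<Rightarrow> nat \<Rightarrow> nat
     \<Rightarrow> ('a list set \<Rightarrow> real) \<Rightarrow> 'a list set \<Rightarrow> real" where
  "pi_x U rel fn C n m \<omega> = (\<lambda>D. if D \<in> LL U rel fn C n then \<omega> (ext_x U n m D) else 0)"

definition pi_y ::
  "'a set \<Rightarrow> ('r \<Rightarrow> 'a list \<Rightarrow> bool) \<Rightarrow> ('f \<Rightarrow> 'a list \<Rightarrow> 'a) \<Rightarrow> 'a set \<Rightarrow> nat \<Rightarrow> nat
     \<Rightarrow> ('a list set \<Rightarrow> real) \<Rightarrow> 'a list set \<Rightarrow> real" where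
  "pi_y U rel fn C n m \<omega> = (\<lambda>D. if D \<in> LL U rel fn C m then \<omega> (ext_y U n m D) else 0)"

definition E_above_over ::
  "'a set \<Rightarrow> ('r \<Rightarrow> 'a list \<Rightarrow> bool) \<Rightarrow> ('f \<Rightarrow> 'a list \<Rightarrow> 'a) \<Rightarrow> 'a set \<Rightarrow> nat \<Rightarrow> nat
     \<Rightarrow> ('a list set \<Rightarrow> real) \<Rightarrow> ('a list set \<Rightarrow> real) \<Rightarrow> bool" where
  "E_above_over U rel fn A n m \<mu> \<nu> \<longleftrightarrow>
     (\<exists>lam\<in>MM U rel fn A (n + m).
        pi_x U rel fn A n m lam = restr (LL U rel fn A n) \<mu> \<and>
        (\<forall>\<omega>\<in>MM U rel fn U (n + m).
           restr (LL U rel fn A (n + m)) \<omega> = lam \<and> pi_x U rel fn U n m \<omega> = \<mu>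
           \<longrightarrow> pi_y U rel fn U n m \<omega> = \<nu>))"

definition E_above ::
  "'k rel \<Rightarrow> 'a set \<Rightarrow> ('r \<Rightarrow> 'a list \<Rightarrow> bool) \<Rightarrow> ('f \<Rightarrow> 'a list \<Rightarrow> 'a) \<Rightarrow> nat \<Rightarrow> nat
     \<Rightarrow> ('a list set \<Rightarrow> real) \<Rightarrow> ('a list set \<Rightarrow> real) \<Rightarrow> bool" where
  "E_above \<kappa> U rel fn n m \<mu> \<nu> \<longleftrightarrow> (\<exists>A. small \<kappa> U A \<and> E_above_over U rel fn A n m \<mu> \<nu>)"

definition smooth_over ::
  "'a set \<Rightarrow> ('r \<Rightarrow> 'a list \<Rightarrow> bool) \<Rightarrow> ('f \<Rightarrow> 'a list \<Rightarrow> 'a) \<Rightarrow> 'a set \<Rightarrow> nat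
     \<Rightarrow> ('a list set \<Rightarrow> real) \<Rightarrow> bool" where
  "smooth_over U rel fn A n \<mu> \<longleftrightarrow> \<mu> \<in> MM U rel fn U n \<and>
     (\<forall>\<mu>'\<in>MM U rel fn U n. restr (LL U rel fn A n) \<mu>' = restr (LL U rel fn A n) \<mu> \<longrightarrow> \<mu>' = \<mu>)"

definition smooth ::
  "'k rel \<Rightarrow> 'a set \<Rightarrow> ('r \<Rightarrow> 'a list \<Rightarrow> bool) \<Rightarrow> ('f \<Rightarrow> 'a list \<Rightarrow> 'a) \<Rightarrow> nat
     \<Rightarrow> ('a list set \<Rightarrow> real) \<Rightarrow> bool" where
  "smooth \<kappa> U rel fn n \<mu> \<longleftrightarrow> (\<exists>A. small \<kappa> U A \<and> smooth_over U rel fn A n \<mu>)"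

end

theory Submission
  imports Defs "HOL-Analysis.Measure_Space"
begin

(* Let \<theta> over A witness \<mu> \<ge>\<^sub>E \<nu> and let \<mu> be smooth over B.  Finitely additive measures on two
   subalgebras that agree on their intersection can be amalgamated as soon as every inclusion
   between sets of the two algebras is interpolated by a set of the intersection (Zorn's lemma over
   one-set extensions in the style of Los and Marczewski); for definable sets, interpolants exist
   because projections of definable sets are definable.  Amalgamating \<theta> with \<mu> gives a global
   \<omega>1 with x-marginal \<mu>, hence with y-marginal \<nu>.  If \<nu>' agrees with \<nu> over A \<union> B,
   amalgamating the restriction of \<omega>1 to A \<union> B with \<nu>' gives \<omega>2 whose x-marginal agrees with
   \<mu> over B, hence is \<mu> by smoothness; so \<nu>' = \<nu>, and \<nu> is smooth over A \<union> B. *)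

section \<open>Finitely additive measures on algebras of sets\<close>

definition fa_measure :: "'a set set \<Rightarrow> ('a set \<Rightarrow> real) \<Rightarrow> bool" where
  "fa_measure M \<mu> \<longleftrightarrow> additive M \<mu> \<and> (\<forall>A\<in>M. 0 \<le> \<mu> A)"

lemma additive_add:
  fixes f g :: "'a set \<Rightarrow> real"
  shows "additive M f \<Longrightarrow> additive M g \<Longrightarrow> additive M (\<lambda>A. f A + g A)"
  unfolding additive_def by (auto simp: algebra_simps)

lemma additive_diff:
  fixes f g :: "'a set \<Rightarrow> real"
  shows "additive M f \<Longrightarrow> additive M g \<Longrightarrow> additive M (\<lambda>A. f A - g A)"
  unfolding additive_def by (auto simp: algebra_simps)

lemma fa_measure_subset: "fa_measure N \<mu> \<Longrightarrow> M \<subseteq> N \<Longrightarrow> fa_measure M \<mu>"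
  unfolding fa_measure_def additive_def by blast

lemma (in ring_of_sets) additive_empty:
  fixes \<mu> :: "'a set \<Rightarrow> real"
  shows "additive M \<mu> \<Longrightarrow> \<mu> {} = 0"
  using additiveD[of M \<mu> "{}" "{}"] by simp

lemma (in ring_of_sets) additive_split:
  assumes "additive M \<mu>" "A \<in> M" "B \<in> M"
  shows "\<mu> A = \<mu> (A \<inter> B) + \<mu> (A - B)"
proof -
  have "\<mu> ((A \<inter> B) \<union> (A - B)) = \<mu> (A \<inter> B) + \<mu> (A - B)"
    using assms by (intro additiveD) auto
  then show ?thesis
    by (simp add: Int_Diff_Un)
qed

lemma (in ring_of_sets) fa_measure_trace:
  assumes \<mu>: "fa_measure M \<mu>" and D: "D \<in> M" and "M' \<subseteq> M"
  shows "fa_measure M' (\<lambda>A. \<mu> (A \<inter> D))" "fa_measure M' (\<lambda>A. \<mu> (A - D))"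
proof -
  have M': "A \<inter> D \<in> M" "A - D \<in> M" if "A \<in> M'" for A
    using that D \<open>M' \<subseteq> M\<close> by auto
  have "\<mu> ((A \<union> B) \<inter> D) = \<mu> (A \<inter> D) + \<mu> (B \<inter> D)"
    "\<mu> (A \<union> B - D) = \<mu> (A - D) + \<mu> (B - D)"
    if "A \<in> M'" "B \<in> M'" "A \<inter> B = {}" for A B
    using \<mu> M' that unfolding fa_measure_def Int_Un_distrib2 Un_Diff by (auto intro!: additiveD)
  then show "fa_measure M' (\<lambda>A. \<mu> (A \<inter> D))" "fa_measure M' (\<lambda>A. \<mu> (A - D))"
    using \<mu> M' unfolding fa_measure_def additive_def by auto
qed

lemma (in ring_of_sets) fa_measure_mono:
  assumes "fa_measure M \<mu>" "A \<in> M" "B \<in> M" "A \<subseteq> B"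
  shows "\<mu> A \<le> \<mu> B"
proof -
  have "\<mu> B = \<mu> (B \<inter> A) + \<mu> (B - A)"
    using assms additive_split unfolding fa_measure_def by blast
  moreover have "B \<inter> A = A" "0 \<le> \<mu> (B - A)"
    using assms unfolding fa_measure_def by auto
  ultimately show ?thesis
    by simp
qed

lemma (in ring_of_sets) additive_cong_Int:
  assumes "additive M \<psi>" and null: "\<forall>A\<in>M. A \<inter> Y = {} \<longrightarrow> \<psi> A = 0"
    and "A \<in> M" "B \<in> M" "A \<inter> Y = B \<inter> Y"
  shows "\<psi> A = \<psi> B"
proof -
  have "\<psi> (A - B) = 0" "\<psi> (B - A) = 0"
    using null assms(3-5) by blast+
  then show ?thesis
    using additive_split[OF assms(1,3,4)] additive_split[OF assms(1,4,3)] by (simp add: Int_commute)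
qed

definition adjoin :: "'a set set \<Rightarrow> 'a set \<Rightarrow> 'a set set" where
  "adjoin M Y = {(A \<inter> Y) \<union> (B - Y) | A B. A \<in> M \<and> B \<in> M}"

lemma adjoinI: "A \<in> M \<Longrightarrow> B \<in> M \<Longrightarrow> (A \<inter> Y) \<union> (B - Y) \<in> adjoin M Y"
  unfolding adjoin_def by blast

lemma adjoinE:
  assumes "H \<in> adjoin M Y"
  obtains A B where "A \<in> M" "B \<in> M" "H = (A \<inter> Y) \<union> (B - Y)"
  using assms unfolding adjoin_def by blast

lemma (in algebra) algebra_adjoin:
  assumes "Y \<subseteq> \<Omega>"
  shows "algebra \<Omega> (adjoin M Y)"
  unfolding algebra_iff_Int
proof (intro conjI ballI)
  show "adjoin M Y \<subseteq> Pow \<Omega>"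
    using sets_into_space by (auto elim!: adjoinE)
  show "{} \<in> adjoin M Y"
    using adjoinI[of "{}" M "{}" Y] by simp
next
  fix H
  assume "H \<in> adjoin M Y"
  then obtain A B where AB: "A \<in> M" "B \<in> M" "H = (A \<inter> Y) \<union> (B - Y)"
    by (rule adjoinE)
  then have "\<Omega> - H = ((\<Omega> - A) \<inter> Y) \<union> ((\<Omega> - B) - Y)"
    using assms by blast
  then show "\<Omega> - H \<in> adjoin M Y"
    using AB by (auto intro: adjoinI)
next
  fix H H'
  assume "H \<in> adjoin M Y" "H' \<in> adjoin M Y"
  then obtain A B A' B' where AB: "A \<in> M" "B \<in> M" "H = (A \<inter> Y) \<union> (B - Y)"
    and AB': "A' \<in> M" "B' \<in> M" "H' = (A' \<inter> Y) \<union> (B' - Y)"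
    by (metis adjoinE)
  then have "H \<inter> H' = ((A \<inter> A') \<inter> Y) \<union> ((B \<inter> B') - Y)"
    by blast
  then show "H \<inter> H' \<in> adjoin M Y"
    using AB AB' by (auto intro: adjoinI)
qed

lemma subset_adjoin: "M \<subseteq> adjoin M Y"
  using adjoinI[of A M A Y for A] by (simp add: Int_Diff_Un subsetI)

lemma (in algebra) in_adjoin: "Y \<subseteq> \<Omega> \<Longrightarrow> Y \<in> adjoin M Y"
  using adjoinI[of \<Omega> M "{}" Y] by (simp add: Int_absorb1)

lemma (in algebra) adjoin_subset: "M' \<subseteq> M \<Longrightarrow> Y \<in> M \<Longrightarrow> adjoin M' Y \<subseteq> M"
  by (auto elim!: adjoinE)

lemma (in algebra) adjoin_within:
  assumes "algebra \<Omega> M'" "M' \<subseteq> M" "Y \<in> M"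
  shows "algebra \<Omega> (adjoin M' Y) \<and> adjoin M' Y \<subseteq> M \<and> Y \<in> adjoin M' Y \<and> M' \<subseteq> adjoin M' Y"
  using algebra.algebra_adjoin[OF assms(1)] algebra.in_adjoin[OF assms(1)] adjoin_subset[OF assms(2,3)]
    subset_adjoin sets_into_space[OF assms(3)] by simp

lemma adjoin_complement:
  assumes "M \<subseteq> Pow \<Omega>"
  shows "adjoin M (\<Omega> - Y) = adjoin M Y"
proof -
  have swap: "(A \<inter> (\<Omega> - Y)) \<union> (B - (\<Omega> - Y)) = (B \<inter> Y) \<union> (A - Y)" if "A \<in> M" "B \<in> M" for A B
  proof -
    have "A \<subseteq> \<Omega>" "B \<subseteq> \<Omega>"
      using that assms by auto
    then show ?thesis
      by blast
  qed
  show ?thesis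
  proof (intro equalityI subsetI)
    fix H
    assume "H \<in> adjoin M (\<Omega> - Y)"
    then show "H \<in> adjoin M Y"
      by (auto elim!: adjoinE intro: adjoinI simp: swap)
  next
    fix H
    assume "H \<in> adjoin M Y"
    then show "H \<in> adjoin M (\<Omega> - Y)"
      by (auto elim!: adjoinE intro: adjoinI simp: swap[symmetric])
  qed
qed

lemma (in ring_of_sets) additive_adjoin_lift:
  fixes \<psi> :: "'a set \<Rightarrow> real"
  assumes \<psi>: "additive M \<psi>" and null: "\<forall>A\<in>M. A \<inter> Y = {} \<longrightarrow> \<psi> A = 0"
  obtains \<psi>' where "additive (adjoin M Y) \<psi>'"
    "\<And>A B. A \<in> M \<Longrightarrow> B \<in> M \<Longrightarrow> \<psi>' ((A \<inter> Y) \<union> (B - Y)) = \<psi> A"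
proof
  define \<psi>' where "\<psi>' H = \<psi> (SOME A. A \<in> M \<and> A \<inter> Y = H \<inter> Y)" for H
  have val: "\<psi>' H = \<psi> A" if "A \<in> M" "A \<inter> Y = H \<inter> Y" for A H
  proof -
    have "\<exists>A. A \<in> M \<and> A \<inter> Y = H \<inter> Y"
      using that by blast
    then show ?thesis
      unfolding \<psi>'_def by (rule someI2_ex) (use that in \<open>auto intro: additive_cong_Int[OF \<psi> null]\<close>)
  qed
  have trace: "\<exists>A\<in>M. A \<inter> Y = H \<inter> Y" if "H \<in> adjoin M Y" for H
    using that by (elim adjoinE) blast
  show "\<psi>' ((A \<inter> Y) \<union> (B - Y)) = \<psi> A" if "A \<in> M" "B \<in> M" for A B
    using val[OF that(1)] by blast
  show "additive (adjoin M Y) \<psi>'"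
    unfolding additive_def
  proof (intro ballI impI)
    fix H1 H2
    assume H: "H1 \<in> adjoin M Y" "H2 \<in> adjoin M Y" "H1 \<inter> H2 = {}"
    then obtain A1 A2 where A: "A1 \<in> M" "A2 \<in> M" "A1 \<inter> Y = H1 \<inter> Y" "A2 \<inter> Y = H2 \<inter> Y"
      using trace by meson
    have "\<psi> (A2 - A1) = \<psi> A2"
      using A H(3) by (intro additive_cong_Int[OF \<psi> null]) blast+
    moreover have "\<psi> (A1 \<union> (A2 - A1)) = \<psi> A1 + \<psi> (A2 - A1)"
      using A by (intro additiveD[OF \<psi>]) auto
    moreover have "\<psi>' (H1 \<union> H2) = \<psi> (A1 \<union> (A2 - A1))"
      using A by (intro val) blast+
    ultimately show "\<psi>' (H1 \<union> H2) = \<psi>' H1 + \<psi>' H2"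
      using val A by simp
  qed
qed

text \<open>The one-step extension of Los and Marczewski: \<open>\<psi>\<close> prescribes how much of the measure
of each set is pushed into \<open>Y\<close>.\<close>

lemma (in algebra) fa_measure_adjoin:
  assumes Y: "Y \<subseteq> \<Omega>" and \<mu>: "fa_measure M \<mu>" and \<psi>: "additive M \<psi>"
    and bounds: "\<forall>A\<in>M. 0 \<le> \<psi> A \<and> \<psi> A \<le> \<mu> A"
    and null: "\<forall>A\<in>M. A \<inter> Y = {} \<longrightarrow> \<psi> A = 0"
    and full: "\<forall>A\<in>M. A \<subseteq> Y \<longrightarrow> \<psi> A = \<mu> A"
  obtains \<mu>' where "fa_measure (adjoin M Y) \<mu>'" "\<forall>A\<in>M. \<mu>' A = \<mu> A"
    "\<And>A B. A \<in> M \<Longrightarrow> B \<in> M \<Longrightarrow> \<mu>' ((A \<inter> Y) \<union> (B - Y)) = \<psi> A + (\<mu> B - \<psi> B)"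
proof -
  obtain \<psi>' where \<psi>': "additive (adjoin M Y) \<psi>'"
    and \<psi>'_val: "\<And>A B. A \<in> M \<Longrightarrow> B \<in> M \<Longrightarrow> \<psi>' ((A \<inter> Y) \<union> (B - Y)) = \<psi> A"
    using additive_adjoin_lift[OF \<psi> null] by blast
  have \<chi>: "additive M (\<lambda>A. \<mu> A - \<psi> A)"
    using \<mu> \<psi> by (simp add: fa_measure_def additive_diff)
  have \<chi>_null: "\<forall>A\<in>M. A \<inter> (\<Omega> - Y) = {} \<longrightarrow> \<mu> A - \<psi> A = 0"
    using full sets_into_space by fastforce
  obtain \<chi>' where \<chi>': "additive (adjoin M (\<Omega> - Y)) \<chi>'"
    and \<chi>'_val: "\<And>A B. A \<in> M \<Longrightarrow> B \<in> M \<Longrightarrow> \<chi>' ((A \<inter> (\<Omega> - Y)) \<union> (B - (\<Omega> - Y))) = \<mu> A - \<psi> A"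
    using additive_adjoin_lift[OF \<chi> \<chi>_null] by blast
  define \<mu>' where "\<mu>' H = \<psi>' H + \<chi>' H" for H
  have val: "\<mu>' ((A \<inter> Y) \<union> (B - Y)) = \<psi> A + (\<mu> B - \<psi> B)" if "A \<in> M" "B \<in> M" for A B
  proof -
    have "(A \<inter> Y) \<union> (B - Y) = (B \<inter> (\<Omega> - Y)) \<union> (A - (\<Omega> - Y))"
      using that sets_into_space by blast
    then show ?thesis
      unfolding \<mu>'_def using \<psi>'_val[OF that] \<chi>'_val[OF that(2,1)] by simp
  qed
  have "fa_measure (adjoin M Y) \<mu>'"
    unfolding fa_measure_def
  proof
    show "additive (adjoin M Y) \<mu>'"
      unfolding \<mu>'_def using additive_add[OF \<psi>' \<chi>'[unfolded adjoin_complement[OF space_closed]]] .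
    show "\<forall>H\<in>adjoin M Y. 0 \<le> \<mu>' H"
      using val bounds by (auto elim!: adjoinE)
  qed
  moreover have "\<forall>A\<in>M. \<mu>' A = \<mu> A"
    using val[of A A for A] by (simp add: Int_Diff_Un)
  ultimately show ?thesis
    using that val by blast
qed

definition inner_sup :: "'a set set \<Rightarrow> ('a set \<Rightarrow> real) \<Rightarrow> 'a set \<Rightarrow> real" where
  "inner_sup M h X = (SUP G \<in> {G \<in> M. G \<subseteq> X}. h G)"

lemma inner_sup_upper: "bdd_above (h ` M) \<Longrightarrow> G \<in> M \<Longrightarrow> G \<subseteq> X \<Longrightarrow> h G \<le> inner_sup M h X"
  unfolding inner_sup_def by (rule cSUP_upper) (auto intro: bdd_above_mono)

lemma inner_sup_least: "{} \<in> M \<Longrightarrow> (\<And>G. G \<in> M \<Longrightarrow> G \<subseteq> X \<Longrightarrow> h G \<le> c) \<Longrightarrow> inner_sup M h X \<le> c"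
  unfolding inner_sup_def by (rule cSUP_least) auto

lemma (in ring_of_sets) inner_sup_bounds:
  assumes bdd: "bdd_above (h ` M)" and "h {} = 0" and \<phi>: "fa_measure M \<phi>" "\<forall>G\<in>M. h G \<le> \<phi> G"
    and "A \<in> M" "X \<subseteq> A"
  shows "0 \<le> inner_sup M h X \<and> inner_sup M h X \<le> \<phi> A"
proof
  show "0 \<le> inner_sup M h X"
    using inner_sup_upper[OF bdd empty_sets] \<open>h {} = 0\<close> by force
  show "inner_sup M h X \<le> \<phi> A"
  proof (rule inner_sup_least)
    fix G
    assume "G \<in> M" "G \<subseteq> X"
    then show "h G \<le> \<phi> A"
      using \<phi> fa_measure_mono[OF \<phi>(1) _ \<open>A \<in> M\<close>] \<open>X \<subseteq> A\<close> by force
  qed simp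
qed

lemma (in ring_of_sets) additive_inner_sup:
  assumes h: "additive M h" and bdd: "bdd_above (h ` M)"
  shows "additive M (\<lambda>A. inner_sup M h (A \<inter> Y))"
  unfolding additive_def
proof (intro ballI impI)
  fix A1 A2
  assume A: "A1 \<in> M" "A2 \<in> M" "A1 \<inter> A2 = {}"
  let ?s = "\<lambda>A. inner_sup M h (A \<inter> Y)"
  have "?s (A1 \<union> A2) \<le> ?s A1 + ?s A2"
  proof (rule inner_sup_least)
    fix G
    assume G: "G \<in> M" "G \<subseteq> (A1 \<union> A2) \<inter> Y"
    have "h G = h ((G \<inter> A1) \<union> (G \<inter> A2))"
      using G(2) by (metis Int_Un_distrib Int_absorb2 le_infE)
    also have "\<dots> = h (G \<inter> A1) + h (G \<inter> A2)"
      using A G by (intro additiveD[OF h]) auto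
    also have "\<dots> \<le> ?s A1 + ?s A2"
      using A G by (intro add_mono inner_sup_upper[OF bdd]) auto
    finally show "h G \<le> ?s A1 + ?s A2" .
  qed simp
  moreover have "?s A1 \<le> ?s (A1 \<union> A2) - ?s A2"
  proof (rule inner_sup_least)
    fix G1
    assume G1: "G1 \<in> M" "G1 \<subseteq> A1 \<inter> Y"
    have "?s A2 \<le> ?s (A1 \<union> A2) - h G1"
    proof (rule inner_sup_least)
      fix G2
      assume G2: "G2 \<in> M" "G2 \<subseteq> A2 \<inter> Y"
      have "h G1 + h G2 = h (G1 \<union> G2)"
        using A G1 G2 by (intro additiveD[OF h, symmetric]) auto
      also have "\<dots> \<le> ?s (A1 \<union> A2)"
        using G1 G2 by (intro inner_sup_upper[OF bdd]) auto
      finally show "h G2 \<le> ?s (A1 \<union> A2) - h G1"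
        by simp
    qed simp
    then show "h G1 \<le> ?s (A1 \<union> A2) - ?s A2"
      by simp
  qed simp
  ultimately show "?s (A1 \<union> A2) = ?s A1 + ?s A2"
    by simp
qed

lemma (in algebra) fa_measure_extend_adjoin:
  assumes \<mu>: "fa_measure M \<mu>" and Y: "Y \<subseteq> \<Omega>"
  obtains \<mu>' where "fa_measure (adjoin M Y) \<mu>'" "\<forall>A\<in>M. \<mu>' A = \<mu> A"
proof -
  define \<psi> where "\<psi> A = inner_sup M \<mu> (A \<inter> Y)" for A
  have bdd: "bdd_above (\<mu> ` M)"
    using fa_measure_mono[OF \<mu>] sets_into_space by (auto intro!: bdd_aboveI[of _ "\<mu> \<Omega>"])
  have \<mu>_empty: "\<mu> {} = 0"
    using \<mu> additive_empty unfolding fa_measure_def by blast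
  have \<psi>: "additive M \<psi>"
    unfolding \<psi>_def using \<mu> additive_inner_sup bdd unfolding fa_measure_def by blast
  have bounds: "\<forall>A\<in>M. 0 \<le> \<psi> A \<and> \<psi> A \<le> \<mu> A"
    unfolding \<psi>_def using inner_sup_bounds[OF bdd \<mu>_empty \<mu>] by blast
  have null: "\<forall>A\<in>M. A \<inter> Y = {} \<longrightarrow> \<psi> A = 0"
  proof (intro ballI impI)
    fix A
    assume "A \<in> M" "A \<inter> Y = {}"
    then have "\<psi> A \<le> 0"
      unfolding \<psi>_def by (intro inner_sup_least) (auto simp: \<mu>_empty)
    then show "\<psi> A = 0"
      using bounds \<open>A \<in> M\<close> by force
  qed
  have full: "\<forall>A\<in>M. A \<subseteq> Y \<longrightarrow> \<psi> A = \<mu> A"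
  proof (intro ballI impI)
    fix A
    assume "A \<in> M" "A \<subseteq> Y"
    then have "\<mu> A \<le> \<psi> A"
      unfolding \<psi>_def by (intro inner_sup_upper[OF bdd]) auto
    then show "\<psi> A = \<mu> A"
      using bounds \<open>A \<in> M\<close> by force
  qed
  show ?thesis
    using fa_measure_adjoin[OF Y \<mu> \<psi> bounds null full] that by metis
qed

text \<open>Under a dominating measure \<open>\<nu>\<close>, the share of \<open>D\<close> must be as large as possible: it is the
supremum of \<open>\<phi> G - \<nu> (G - D)\<close> over \<open>G \<subseteq> A\<close>.\<close>

lemma (in algebra) dominated_share:
  assumes N: "algebra \<Omega> N" "M \<subseteq> N" and \<nu>: "fa_measure N \<nu>"
    and \<phi>: "fa_measure M \<phi>" and dom: "\<forall>A\<in>M. \<phi> A \<le> \<nu> A" and D: "D \<in> N"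
  obtains \<psi> where "additive M \<psi>" "\<forall>A\<in>M. 0 \<le> \<psi> A \<and> \<psi> A \<le> \<phi> A"
    "\<forall>A\<in>M. \<psi> A \<le> \<nu> (A \<inter> D)" "\<forall>A\<in>M. \<phi> A - \<psi> A \<le> \<nu> (A - D)"
proof -
  interpret N: algebra \<Omega> N
    by (fact N(1))
  define h where "h G = \<phi> G - \<nu> (G - D)" for G
  define \<psi> where "\<psi> A = inner_sup M h (A \<inter> \<Omega>)" for A
  have inN: "A \<in> N" if "A \<in> M" for A
    using N(2) that by blast
  have h_le: "h G \<le> \<nu> (G \<inter> D)" if "G \<in> M" for G
    using N.additive_split[of \<nu> G D] \<nu> dom that D inN unfolding h_def fa_measure_def by force
  have h_le_\<phi>: "h G \<le> \<phi> G" if "G \<in> M" for G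
    using \<nu> D inN[OF that] unfolding h_def fa_measure_def by auto
  have h_empty: "h {} = 0"
    using additive_empty[of \<phi>] N.additive_empty[of \<nu>] \<phi> \<nu> unfolding h_def fa_measure_def by simp
  have bdd: "bdd_above (h ` M)"
  proof (rule bdd_aboveI[of _ "\<nu> \<Omega>"])
    fix r
    assume "r \<in> h ` M"
    then obtain G where "G \<in> M" "r = h G"
      by blast
    then show "r \<le> \<nu> \<Omega>"
      using h_le N.fa_measure_mono[OF \<nu>, of "G \<inter> D" \<Omega>] D inN N.sets_into_space by force
  qed
  note \<nu>_D = N.fa_measure_trace[OF \<nu> D N(2)]
  then have "additive M h"
    unfolding h_def using \<phi> additive_diff unfolding fa_measure_def by blast
  then have "additive M \<psi>"
    unfolding \<psi>_def using additive_inner_sup bdd by blast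
  moreover have "\<forall>A\<in>M. 0 \<le> \<psi> A \<and> \<psi> A \<le> \<phi> A"
    unfolding \<psi>_def using inner_sup_bounds[OF bdd h_empty \<phi>] h_le_\<phi> by blast
  moreover have "\<forall>A\<in>M. \<psi> A \<le> \<nu> (A \<inter> D)"
    unfolding \<psi>_def using inner_sup_bounds[OF bdd h_empty \<nu>_D(1)] h_le by blast
  moreover have "\<forall>A\<in>M. \<phi> A - \<psi> A \<le> \<nu> (A - D)"
    using inner_sup_upper[OF bdd] sets_into_space unfolding \<psi>_def h_def by fastforce
  ultimately show ?thesis
    using that by blast
qed

lemma (in algebra) dominated_fa_measure_extend_adjoin:
  assumes N: "algebra \<Omega> N" "M \<subseteq> N" and \<nu>: "fa_measure N \<nu>"
    and \<phi>: "fa_measure M \<phi>" and dom: "\<forall>A\<in>M. \<phi> A \<le> \<nu> A" and D: "D \<in> N"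
  obtains \<phi>' where "fa_measure (adjoin M D) \<phi>'" "\<forall>A\<in>M. \<phi>' A = \<phi> A"
    "\<forall>H\<in>adjoin M D. \<phi>' H \<le> \<nu> H"
proof -
  interpret N: algebra \<Omega> N
    by (fact N(1))
  obtain \<psi> where \<psi>: "additive M \<psi>" and bounds: "\<forall>A\<in>M. 0 \<le> \<psi> A \<and> \<psi> A \<le> \<phi> A"
    and in_D: "\<forall>A\<in>M. \<psi> A \<le> \<nu> (A \<inter> D)" and off_D: "\<forall>A\<in>M. \<phi> A - \<psi> A \<le> \<nu> (A - D)"
    using dominated_share[OF assms] by blast
  have \<nu>_empty: "\<nu> {} = 0"
    using \<nu> N.additive_empty unfolding fa_measure_def by blast
  have null: "\<forall>A\<in>M. A \<inter> D = {} \<longrightarrow> \<psi> A = 0"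
    using in_D bounds \<nu>_empty by force
  have full: "\<forall>A\<in>M. A \<subseteq> D \<longrightarrow> \<psi> A = \<phi> A"
  proof (intro ballI impI)
    fix A
    assume "A \<in> M" "A \<subseteq> D"
    then have "\<phi> A - \<psi> A \<le> 0"
      using off_D \<nu>_empty by (metis Diff_eq_empty_iff)
    then show "\<psi> A = \<phi> A"
      using bounds \<open>A \<in> M\<close> by force
  qed
  obtain \<phi>' where \<phi>': "fa_measure (adjoin M D) \<phi>'" "\<forall>A\<in>M. \<phi>' A = \<phi> A"
    and val: "\<And>A B. A \<in> M \<Longrightarrow> B \<in> M \<Longrightarrow> \<phi>' ((A \<inter> D) \<union> (B - D)) = \<psi> A + (\<phi> B - \<psi> B)"
    using fa_measure_adjoin[OF N.sets_into_space[OF D] \<phi> \<psi> bounds null full] by blast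
  have "\<phi>' H \<le> \<nu> H" if "H \<in> adjoin M D" for H
  proof -
    obtain A B where AB: "A \<in> M" "B \<in> M" "H = (A \<inter> D) \<union> (B - D)"
      using \<open>H \<in> adjoin M D\<close> by (rule adjoinE)
    have "\<nu> ((A \<inter> D) \<union> (B - D)) = \<nu> (A \<inter> D) + \<nu> (B - D)"
      using AB N(2) D \<nu> unfolding fa_measure_def by (intro additiveD) auto
    then show ?thesis
      using val[OF AB(1,2)] in_D off_D AB by fastforce
  qed
  then show ?thesis
    using that \<phi>' by blast
qed

definition extended_by :: "'a set set \<times> ('a set \<Rightarrow> 'b) \<Rightarrow> 'a set set \<times> ('a set \<Rightarrow> 'b) \<Rightarrow> bool" where
  "extended_by p q \<longleftrightarrow> fst p \<subseteq> fst q \<and> (\<forall>A\<in>fst p. snd q A = snd p A)"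

abbreviation extension_chain :: "('a set set \<times> ('a set \<Rightarrow> 'b)) set \<Rightarrow> bool" where
  "extension_chain \<equiv> Complete_Partial_Order.chain extended_by"

definition chain_glue :: "('a set set \<times> ('a set \<Rightarrow> 'b)) set \<Rightarrow> 'a set \<Rightarrow> 'b" where
  "chain_glue C A = (SOME r. \<exists>p\<in>C. A \<in> fst p \<and> r = snd p A)"

lemma extended_by_trans: "extended_by p q \<Longrightarrow> extended_by q r \<Longrightarrow> extended_by p r"
  unfolding extended_by_def by auto

lemma chain_glue_eq:
  assumes C: "extension_chain C" and "p \<in> C" "A \<in> fst p"
  shows "chain_glue C A = snd p A"
proof -
  have "\<exists>r. \<exists>q\<in>C. A \<in> fst q \<and> r = snd q A"
    using assms(2,3) by blast
  then show ?thesis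
    unfolding chain_glue_def
  proof (rule someI2_ex)
    fix r
    assume "\<exists>q\<in>C. A \<in> fst q \<and> r = snd q A"
    then obtain q where "q \<in> C" "A \<in> fst q" "r = snd q A"
      by blast
    then show "r = snd p A"
      using chainD[OF C \<open>p \<in> C\<close> \<open>q \<in> C\<close>] \<open>A \<in> fst p\<close> unfolding extended_by_def by auto
  qed
qed

lemma extended_by_chain_glue:
  assumes "extension_chain C" "p \<in> C"
  shows "extended_by p (\<Union>(fst ` C), chain_glue C)"
  using chain_glue_eq[OF assms] assms(2) unfolding extended_by_def by auto

lemma extension_chain_common:
  "extension_chain C \<Longrightarrow> A \<in> \<Union>(fst ` C) \<Longrightarrow> B \<in> \<Union>(fst ` C) \<Longrightarrow> \<exists>p\<in>C. A \<in> fst p \<and> B \<in> fst p"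
  unfolding extended_by_def Complete_Partial_Order.chain_def by blast

lemma chain_glue_pointwise:
  "extension_chain C \<Longrightarrow> \<forall>p\<in>C. \<forall>A\<in>fst p. R A (snd p A) \<Longrightarrow> \<forall>A\<in>\<Union>(fst ` C). R A (chain_glue C A)"
  using chain_glue_eq by fastforce

lemma fa_measure_chain_glue:
  assumes "C \<noteq> {}" and C: "extension_chain C"
    and alg: "\<forall>p\<in>C. algebra \<Omega> (fst p) \<and> fa_measure (fst p) (snd p)"
  shows "algebra \<Omega> (\<Union>(fst ` C))" "fa_measure (\<Union>(fst ` C)) (chain_glue C)"
proof -
  show "algebra \<Omega> (\<Union>(fst ` C))"
    unfolding algebra_iff_Int
  proof (intro conjI ballI)
    show "\<Union>(fst ` C) \<subseteq> Pow \<Omega>" "{} \<in> \<Union>(fst ` C)"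
      using alg \<open>C \<noteq> {}\<close> unfolding algebra_iff_Int by blast+
    show "\<Omega> - A \<in> \<Union>(fst ` C)" if "A \<in> \<Union>(fst ` C)" for A
      using alg that unfolding algebra_iff_Int by blast
    show "A \<inter> B \<in> \<Union>(fst ` C)" if "A \<in> \<Union>(fst ` C)" "B \<in> \<Union>(fst ` C)" for A B
      using extension_chain_common[OF C that] alg unfolding algebra_iff_Int by blast
  qed
  have "additive (\<Union>(fst ` C)) (chain_glue C)"
    unfolding additive_def
  proof (intro ballI impI)
    fix A B
    assume "A \<in> \<Union>(fst ` C)" "B \<in> \<Union>(fst ` C)" "A \<inter> B = {}"
    then obtain p where p: "p \<in> C" "A \<in> fst p" "B \<in> fst p"
      using extension_chain_common[OF C] by blast
    then interpret algebra \<Omega> "fst p"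
      using alg by blast
    have "snd p (A \<union> B) = snd p A + snd p B"
      using p alg \<open>A \<inter> B = {}\<close> unfolding fa_measure_def by (intro additiveD) auto
    moreover have "A \<union> B \<in> fst p"
      using p by blast
    ultimately show "chain_glue C (A \<union> B) = chain_glue C A + chain_glue C B"
      using chain_glue_eq[OF C p(1)] p by auto
  qed
  moreover have "\<forall>A\<in>\<Union>(fst ` C). 0 \<le> chain_glue C A"
    using chain_glue_pointwise[OF C, of "\<lambda>A r. 0 \<le> r"] alg unfolding fa_measure_def by blast
  ultimately show "fa_measure (\<Union>(fst ` C)) (chain_glue C)"
    unfolding fa_measure_def by blast
qed

lemma extension_maximal:
  fixes P :: "('a set set \<times> ('a set \<Rightarrow> 'b)) set"
  assumes "P \<noteq> {}"
    and chains: "\<And>C. C \<noteq> {} \<Longrightarrow> C \<subseteq> P \<Longrightarrow> extension_chain C \<Longrightarrow> (\<Union>(fst ` C), chain_glue C) \<in> P"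
  obtains p where "p \<in> P" "\<And>q. q \<in> P \<Longrightarrow> extended_by p q \<Longrightarrow> fst q = fst p"
proof -
  define graph where "graph p = (\<lambda>A. (A, snd p A)) ` fst p" for p :: "'a set set \<times> ('a set \<Rightarrow> 'b)"
  have graph_subset: "graph p \<subseteq> graph q \<longleftrightarrow> extended_by p q" for p q
    unfolding graph_def extended_by_def by auto
  have fst_graph: "fst ` graph p = fst p" for p
    unfolding graph_def by force
  have "\<exists>G\<in>graph ` P. \<forall>G'\<in>graph ` P. G \<subseteq> G' \<longrightarrow> G' = G"
  proof (rule Zorn_Lemma2, intro ballI)
    fix Ch
    assume Ch: "Ch \<in> chains (graph ` P)"
    define C where "C = {p \<in> P. graph p \<in> Ch}"
    show "\<exists>G\<in>graph ` P. \<forall>G'\<in>Ch. G' \<subseteq> G"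
    proof (cases "C = {}")
      case True
      then have "Ch = {}"
        using Ch unfolding C_def chains_def by blast
      then show ?thesis
        using \<open>P \<noteq> {}\<close> by blast
    next
      case False
      have C: "extension_chain C"
      proof (rule chainI)
        fix p q
        assume "p \<in> C" "q \<in> C"
        then have "graph p \<subseteq> graph q \<or> graph q \<subseteq> graph p"
          using Ch unfolding C_def chains_def chain_subset_def by blast
        then show "extended_by p q \<or> extended_by q p"
          unfolding graph_subset .
      qed
      have "(\<Union>(fst ` C), chain_glue C) \<in> P"
        using chains[OF False _ C] unfolding C_def by blast
      moreover have "G' \<subseteq> graph (\<Union>(fst ` C), chain_glue C)" if "G' \<in> Ch" for G'
      proof -
        obtain p where "p \<in> P" "G' = graph p"
          using Ch \<open>G' \<in> Ch\<close> unfolding chains_def by blast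
        then have "p \<in> C"
          unfolding C_def using \<open>G' \<in> Ch\<close> by blast
        then show ?thesis
          using extended_by_chain_glue[OF C] graph_subset \<open>G' = graph p\<close> by blast
      qed
      ultimately show ?thesis
        by blast
    qed
  qed
  then obtain p where "p \<in> P" "\<forall>q\<in>P. graph p \<subseteq> graph q \<longrightarrow> graph q = graph p"
    by blast
  then show ?thesis
    using that graph_subset fst_graph by metis
qed

lemma zorn_extension:
  fixes Q :: "'a set set \<Rightarrow> ('a set \<Rightarrow> 'b) \<Rightarrow> bool"
  assumes start: "Q M0 \<mu>0" "M0 \<subseteq> N"
    and chain: "\<And>C. C \<noteq> {} \<Longrightarrow> extension_chain C \<Longrightarrow> \<forall>p\<in>C. Q (fst p) (snd p) \<and> fst p \<subseteq> N
                   \<Longrightarrow> Q (\<Union>(fst ` C)) (chain_glue C)"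
    and step: "\<And>M \<mu> Y. Q M \<mu> \<Longrightarrow> M \<subseteq> N \<Longrightarrow> Y \<in> T \<Longrightarrow> Y \<notin> M \<Longrightarrow>
                 \<exists>M' \<mu>'. Q M' \<mu>' \<and> M' \<subseteq> N \<and> Y \<in> M' \<and> extended_by (M, \<mu>) (M', \<mu>')"
  obtains M \<mu> where "Q M \<mu>" "M \<subseteq> N" "T \<subseteq> M" "extended_by (M0, \<mu>0) (M, \<mu>)"
proof -
  define P where "P = {p. Q (fst p) (snd p) \<and> fst p \<subseteq> N \<and> extended_by (M0, \<mu>0) p}"
  have "(M0, \<mu>0) \<in> P"
    using start unfolding P_def extended_by_def by auto
  moreover have "(\<Union>(fst ` C), chain_glue C) \<in> P" if "C \<noteq> {}" "C \<subseteq> P" "extension_chain C" for C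
  proof -
    obtain p where "p \<in> C"
      using \<open>C \<noteq> {}\<close> by blast
    then have "extended_by (M0, \<mu>0) (\<Union>(fst ` C), chain_glue C)"
      using extended_by_trans extended_by_chain_glue[OF that(3)] that(2) unfolding P_def by blast
    moreover have "Q (\<Union>(fst ` C)) (chain_glue C)" "\<Union>(fst ` C) \<subseteq> N"
      using chain[OF that(1,3)] that(2) unfolding P_def by blast+
    ultimately show ?thesis
      unfolding P_def by simp
  qed
  ultimately obtain p where p: "p \<in> P" and maximal: "\<And>q. q \<in> P \<Longrightarrow> extended_by p q \<Longrightarrow> fst q = fst p"
    using extension_maximal[of P] by blast
  have "Y \<in> fst p" if "Y \<in> T" for Y
  proof (rule ccontr)
    assume "Y \<notin> fst p"
    then obtain M' \<mu>' where q: "Q M' \<mu>'" "M' \<subseteq> N" "Y \<in> M'" "extended_by p (M', \<mu>')"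
      using step[of "fst p" "snd p" Y] p \<open>Y \<in> T\<close> unfolding P_def by auto
    then have "(M', \<mu>') \<in> P"
      using p extended_by_trans[of "(M0, \<mu>0)" p "(M', \<mu>')"] unfolding P_def by auto
    then show False
      using maximal q(3,4) \<open>Y \<notin> fst p\<close> by fastforce
  qed
  then show ?thesis
    using that[of "fst p" "snd p"] p unfolding P_def by auto
qed

lemma fa_measure_extension:
  assumes N: "algebra \<Omega> N" and M: "algebra \<Omega> M" "M \<subseteq> N" and \<mu>: "fa_measure M \<mu>"
  obtains \<mu>' where "fa_measure N \<mu>'" "\<forall>A\<in>M. \<mu>' A = \<mu> A"
proof -
  interpret N: algebra \<Omega> N
    by (fact N)
  define Q where "Q M' \<mu>' \<longleftrightarrow> algebra \<Omega> M' \<and> fa_measure M' \<mu>'" for M' \<mu>'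
  obtain M' \<mu>' where "Q M' \<mu>'" "M' \<subseteq> N" "N \<subseteq> M'" "extended_by (M, \<mu>) (M', \<mu>')"
  proof (rule zorn_extension[of Q M \<mu> N N])
    show "Q M \<mu>" "M \<subseteq> N"
      using M \<mu> unfolding Q_def by auto
    show "Q (\<Union>(fst ` C)) (chain_glue C)"
      if "C \<noteq> {}" "extension_chain C" "\<forall>p\<in>C. Q (fst p) (snd p) \<and> fst p \<subseteq> N" for C
      using fa_measure_chain_glue[OF that(1,2)] that(3) unfolding Q_def by blast
  next
    fix M' \<mu>' Y
    assume "Q M' \<mu>'" "M' \<subseteq> N" "Y \<in> N" "Y \<notin> M'"
    then have M': "algebra \<Omega> M'" "fa_measure M' \<mu>'"
      unfolding Q_def by blast+
    obtain \<mu>'' where "fa_measure (adjoin M' Y) \<mu>''" "\<forall>A\<in>M'. \<mu>'' A = \<mu>' A"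
      using algebra.fa_measure_extend_adjoin[OF M'] N.sets_into_space[OF \<open>Y \<in> N\<close>] by blast
    then show "\<exists>M'' \<mu>''. Q M'' \<mu>'' \<and> M'' \<subseteq> N \<and> Y \<in> M'' \<and> extended_by (M', \<mu>') (M'', \<mu>'')"
      using N.adjoin_within[OF M'(1) \<open>M' \<subseteq> N\<close> \<open>Y \<in> N\<close>] unfolding Q_def extended_by_def
      by (intro exI[of _ "adjoin M' Y"] exI) auto
  qed
  then show ?thesis
    using that unfolding Q_def extended_by_def by auto
qed

lemma dominated_fa_measure_extension:
  assumes N: "algebra \<Omega> N" and \<nu>: "fa_measure N \<nu>" and M: "algebra \<Omega> M" "M \<subseteq> N"
    and \<phi>: "fa_measure M \<phi>" and dom: "\<forall>A\<in>M. \<phi> A \<le> \<nu> A"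
  obtains \<phi>' where "fa_measure N \<phi>'" "\<forall>A\<in>N. \<phi>' A \<le> \<nu> A" "\<forall>A\<in>M. \<phi>' A = \<phi> A"
proof -
  interpret N: algebra \<Omega> N
    by (fact N)
  define Q where "Q M' \<phi>' \<longleftrightarrow> algebra \<Omega> M' \<and> fa_measure M' \<phi>' \<and> (\<forall>A\<in>M'. \<phi>' A \<le> \<nu> A)" for M' \<phi>'
  obtain M' \<phi>' where "Q M' \<phi>'" "M' \<subseteq> N" "N \<subseteq> M'" "extended_by (M, \<phi>) (M', \<phi>')"
  proof (rule zorn_extension[of Q M \<phi> N N])
    show "Q M \<phi>" "M \<subseteq> N"
      using M \<phi> dom unfolding Q_def by auto
    show "Q (\<Union>(fst ` C)) (chain_glue C)"
      if "C \<noteq> {}" "extension_chain C" "\<forall>p\<in>C. Q (fst p) (snd p) \<and> fst p \<subseteq> N" for C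
      using fa_measure_chain_glue[OF that(1,2)] chain_glue_pointwise[OF that(2), of "\<lambda>A r. r \<le> \<nu> A"]
        that(3) unfolding Q_def by blast
  next
    fix M' \<phi>' D
    assume "Q M' \<phi>'" "M' \<subseteq> N" "D \<in> N" "D \<notin> M'"
    then have M': "algebra \<Omega> M'" "fa_measure M' \<phi>'" "\<forall>A\<in>M'. \<phi>' A \<le> \<nu> A"
      unfolding Q_def by blast+
    obtain \<phi>'' where "fa_measure (adjoin M' D) \<phi>''" "\<forall>A\<in>M'. \<phi>'' A = \<phi>' A"
      "\<forall>H\<in>adjoin M' D. \<phi>'' H \<le> \<nu> H"
      using algebra.dominated_fa_measure_extend_adjoin[OF M'(1) N \<open>M' \<subseteq> N\<close> \<nu> M'(2,3) \<open>D \<in> N\<close>] by blast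
    then show "\<exists>M'' \<phi>''. Q M'' \<phi>'' \<and> M'' \<subseteq> N \<and> D \<in> M'' \<and> extended_by (M', \<phi>') (M'', \<phi>'')"
      using N.adjoin_within[OF M'(1) \<open>M' \<subseteq> N\<close> \<open>D \<in> N\<close>] unfolding Q_def extended_by_def
      by (intro exI[of _ "adjoin M' D"] exI) auto
  qed
  then show ?thesis
    using that unfolding Q_def extended_by_def by auto
qed

definition interpolating :: "'a set set \<Rightarrow> 'a set set \<Rightarrow> bool" where
  "interpolating M1 M2 \<longleftrightarrow> (\<forall>A\<in>M1. \<forall>B\<in>M2. A \<subseteq> B \<longrightarrow> (\<exists>C\<in>M1 \<inter> M2. A \<subseteq> C \<and> C \<subseteq> B))"

lemma interpolatingE:
  assumes "interpolating M1 M2" "A \<in> M1" "B \<in> M2" "A \<subseteq> B"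
  obtains C where "C \<in> M1 \<inter> M2" "A \<subseteq> C" "C \<subseteq> B"
  using assms unfolding interpolating_def by blast

lemma algebra_Int:
  assumes "algebra \<Omega> M1" "algebra \<Omega> M2"
  shows "algebra \<Omega> (M1 \<inter> M2)"
  using assms unfolding algebra_iff_Int by auto

lemma interpolating_dual:
  assumes M1: "algebra \<Omega> M1" and M2: "algebra \<Omega> M2" and interp: "interpolating M1 M2"
    and AB: "B \<in> M2" "A \<in> M1" "B \<subseteq> A"
  obtains C where "C \<in> M1 \<inter> M2" "B \<subseteq> C" "C \<subseteq> A"
proof -
  interpret M1: algebra \<Omega> M1
    by (fact M1)
  interpret M2: algebra \<Omega> M2
    by (fact M2)
  have "\<Omega> - A \<subseteq> \<Omega> - B"
    using AB by blast
  then obtain C where C: "C \<in> M1 \<inter> M2" "\<Omega> - A \<subseteq> C" "C \<subseteq> \<Omega> - B"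
    using interpolatingE[OF interp M1.compl_sets[OF \<open>A \<in> M1\<close>] M2.compl_sets[OF \<open>B \<in> M2\<close>]] by blast
  then have "\<Omega> - C \<in> M1 \<inter> M2" "B \<subseteq> \<Omega> - C" "\<Omega> - C \<subseteq> A"
    using M2.sets_into_space[OF \<open>B \<in> M2\<close>] M1.sets_into_space[OF \<open>A \<in> M1\<close>] by auto
  then show ?thesis
    using that by blast
qed

lemma interpolating_adjoin:
  assumes M: "algebra \<Omega> M" and M2: "algebra \<Omega> M2" and interp: "interpolating M M2" and E: "E \<in> M2"
  shows "interpolating (adjoin M E) M2"
  unfolding interpolating_def
proof (intro ballI impI)
  interpret M: algebra \<Omega> M
    by (fact M)
  interpret M2: algebra \<Omega> M2
    by (fact M2)
  fix H B
  assume "H \<in> adjoin M E" "B \<in> M2" "H \<subseteq> B"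
  obtain A A' where A: "A \<in> M" "A' \<in> M" "H = (A \<inter> E) \<union> (A' - E)"
    using \<open>H \<in> adjoin M E\<close> by (rule adjoinE)
  have "A \<subseteq> B \<union> (\<Omega> - E)"
    using A \<open>H \<subseteq> B\<close> M.sets_into_space[OF A(1)] by blast
  then obtain F where F: "F \<in> M \<inter> M2" "A \<subseteq> F" "F \<subseteq> B \<union> (\<Omega> - E)"
    using interpolatingE[OF interp A(1) M2.Un[OF \<open>B \<in> M2\<close> M2.compl_sets[OF E]]] by blast
  have "A' \<subseteq> B \<union> E"
    using A \<open>H \<subseteq> B\<close> by blast
  then obtain F' where F': "F' \<in> M \<inter> M2" "A' \<subseteq> F'" "F' \<subseteq> B \<union> E"
    using interpolatingE[OF interp A(2) M2.Un[OF \<open>B \<in> M2\<close> E]] by blast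
  have "(F \<inter> E) \<union> (F' - E) \<in> adjoin M E"
    using F F' by (blast intro: adjoinI)
  moreover have "(F \<inter> E) \<union> (F' - E) \<in> M2"
    using F F' E by blast
  moreover have "H \<subseteq> (F \<inter> E) \<union> (F' - E)" "(F \<inter> E) \<union> (F' - E) \<subseteq> B"
    using A F F' by blast+
  ultimately show "\<exists>C\<in>adjoin M E \<inter> M2. H \<subseteq> C \<and> C \<subseteq> B"
    by blast
qed

lemma amalgamation_share:
  assumes M: "algebra \<Omega> M" and M2: "algebra \<Omega> M2" and \<omega>: "fa_measure M \<omega>" and \<mu>2: "fa_measure M2 \<mu>2"
    and agree: "\<forall>A\<in>M \<inter> M2. \<omega> A = \<mu>2 A" and E: "E \<in> M2"
  obtains \<phi> where "fa_measure M \<phi>" "\<forall>A\<in>M. \<phi> A \<le> \<omega> A" "\<forall>A\<in>M \<inter> M2. \<phi> A = \<mu>2 (A \<inter> E)"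
proof -
  interpret M2: algebra \<Omega> M2
    by (fact M2)
  have in_M2: "A \<inter> E \<in> M2" if "A \<in> M \<inter> M2" for A
    using that E by blast
  have "fa_measure (M \<inter> M2) (\<lambda>A. \<mu>2 (A \<inter> E))"
    using M2.fa_measure_trace(1)[OF \<mu>2 E] by blast
  moreover have "\<forall>A\<in>M \<inter> M2. \<mu>2 (A \<inter> E) \<le> \<omega> A"
    using agree in_M2 M2.fa_measure_mono[OF \<mu>2] by force
  ultimately show ?thesis
    using dominated_fa_measure_extension[OF M \<omega> algebra_Int[OF M M2] _] that by blast
qed

context
  fixes \<Omega> M M2 \<omega> \<mu>2 E \<phi>
  assumes M: "algebra \<Omega> M" and M2: "algebra \<Omega> M2" and \<omega>: "fa_measure M \<omega>" and \<mu>2: "fa_measure M2 \<mu>2"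
    and agree: "\<forall>A\<in>M \<inter> M2. \<omega> A = \<mu>2 A" and interp: "interpolating M M2" and E: "E \<in> M2"
    and \<phi>: "fa_measure M \<phi>" and dom: "\<forall>A\<in>M. \<phi> A \<le> \<omega> A" and on_M2: "\<forall>A\<in>M \<inter> M2. \<phi> A = \<mu>2 (A \<inter> E)"
begin

lemma amalgamation_share_null_full:
  shows "\<forall>A\<in>M. A \<inter> E = {} \<longrightarrow> \<phi> A = 0" "\<forall>A\<in>M. A \<subseteq> E \<longrightarrow> \<phi> A = \<omega> A"
proof -
  interpret M: algebra \<Omega> M
    by (fact M)
  interpret M2: algebra \<Omega> M2
    by (fact M2)
  have \<mu>2_empty: "\<mu>2 {} = 0"
    using \<mu>2 M2.additive_empty unfolding fa_measure_def by blast
  show "\<forall>A\<in>M. A \<inter> E = {} \<longrightarrow> \<phi> A = 0"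
  proof (intro ballI impI)
    fix A
    assume "A \<in> M" "A \<inter> E = {}"
    then have "A \<subseteq> \<Omega> - E"
      using M.sets_into_space by blast
    then obtain F where F: "F \<in> M \<inter> M2" "A \<subseteq> F" "F \<subseteq> \<Omega> - E"
      using interpolatingE[OF interp \<open>A \<in> M\<close> M2.compl_sets[OF E]] by blast
    then have "\<phi> A \<le> \<mu>2 (F \<inter> E)"
      using on_M2 M.fa_measure_mono[OF \<phi> \<open>A \<in> M\<close>] by force
    moreover have "F \<inter> E = {}"
      using F by blast
    ultimately show "\<phi> A = 0"
      using \<phi> \<open>A \<in> M\<close> \<mu>2_empty unfolding fa_measure_def by force
  qed
  have \<chi>: "fa_measure M (\<lambda>A. \<omega> A - \<phi> A)"
    using \<omega> \<phi> dom additive_diff unfolding fa_measure_def by auto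
  show "\<forall>A\<in>M. A \<subseteq> E \<longrightarrow> \<phi> A = \<omega> A"
  proof (intro ballI impI)
    fix A
    assume "A \<in> M" "A \<subseteq> E"
    then obtain F where F: "F \<in> M \<inter> M2" "A \<subseteq> F" "F \<subseteq> E"
      using interpolatingE[OF interp \<open>A \<in> M\<close> E] by blast
    then have "\<omega> A - \<phi> A \<le> \<mu>2 F - \<mu>2 (F \<inter> E)"
      using on_M2 agree M.fa_measure_mono[OF \<chi> \<open>A \<in> M\<close>] by force
    moreover have "F \<inter> E = F"
      using F by blast
    ultimately show "\<phi> A = \<omega> A"
      using dom \<open>A \<in> M\<close> by force
  qed
qed

lemma amalgamation_share_inside: "A \<in> M \<Longrightarrow> A \<inter> E \<in> M2 \<Longrightarrow> \<phi> A = \<mu>2 (A \<inter> E)"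
proof -
  interpret M: algebra \<Omega> M
    by (fact M)
  assume A: "A \<in> M" "A \<inter> E \<in> M2"
  obtain F where F: "F \<in> M \<inter> M2" "A \<inter> E \<subseteq> F" "F \<subseteq> A"
    using interpolating_dual[OF M M2 interp A(2,1)] by blast
  then have "F \<in> M" "(A - F) \<inter> E = {}"
    by blast+
  have "\<phi> A = \<phi> (A \<inter> F) + \<phi> (A - F)"
    using \<phi> M.additive_split[OF _ A(1) \<open>F \<in> M\<close>] unfolding fa_measure_def by blast
  moreover have "\<phi> (A - F) = 0"
    using amalgamation_share_null_full(1) M.Diff[OF A(1) \<open>F \<in> M\<close>] \<open>(A - F) \<inter> E = {}\<close> by blast
  moreover have "A \<inter> F = F" "F \<inter> E = A \<inter> E"
    using F by blast+
  ultimately show "\<phi> A = \<mu>2 (A \<inter> E)"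
    using on_M2 F by simp
qed

lemma amalgamation_share_outside: "A \<in> M \<Longrightarrow> A - E \<in> M2 \<Longrightarrow> \<omega> A - \<phi> A = \<mu>2 (A - E)"
proof -
  interpret M: algebra \<Omega> M
    by (fact M)
  interpret M2: algebra \<Omega> M2
    by (fact M2)
  assume A: "A \<in> M" "A - E \<in> M2"
  obtain F where F: "F \<in> M \<inter> M2" "A - E \<subseteq> F" "F \<subseteq> A"
    using interpolating_dual[OF M M2 interp A(2,1)] by blast
  then have "F \<in> M" "F \<in> M2" "A - F \<subseteq> E"
    by blast+
  have "additive M (\<lambda>A. \<omega> A - \<phi> A)"
    using \<omega> \<phi> additive_diff unfolding fa_measure_def by blast
  then have "\<omega> A - \<phi> A = (\<omega> (A \<inter> F) - \<phi> (A \<inter> F)) + (\<omega> (A - F) - \<phi> (A - F))"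
    by (rule M.additive_split[OF _ A(1) \<open>F \<in> M\<close>])
  moreover have "\<omega> (A - F) - \<phi> (A - F) = 0"
    using amalgamation_share_null_full(2) M.Diff[OF A(1) \<open>F \<in> M\<close>] \<open>A - F \<subseteq> E\<close> by simp
  moreover have "\<mu>2 F = \<mu>2 (F \<inter> E) + \<mu>2 (F - E)"
    using \<mu>2 M2.additive_split[OF _ \<open>F \<in> M2\<close> E] unfolding fa_measure_def by blast
  moreover have "A \<inter> F = F" "F - E = A - E"
    using F by blast+
  ultimately show "\<omega> A - \<phi> A = \<mu>2 (A - E)"
    using on_M2 agree F by simp
qed

end

lemma amalgamation_step:
  assumes M: "algebra \<Omega> M" and M2: "algebra \<Omega> M2" and \<omega>: "fa_measure M \<omega>" and \<mu>2: "fa_measure M2 \<mu>2"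
    and agree: "\<forall>A\<in>M \<inter> M2. \<omega> A = \<mu>2 A" and interp: "interpolating M M2" and E: "E \<in> M2"
  obtains \<omega>' where "fa_measure (adjoin M E) \<omega>'" "\<forall>A\<in>M. \<omega>' A = \<omega> A"
    "\<forall>H\<in>adjoin M E \<inter> M2. \<omega>' H = \<mu>2 H"
proof -
  interpret M: algebra \<Omega> M
    by (fact M)
  interpret M2: algebra \<Omega> M2
    by (fact M2)
  obtain \<phi> where \<phi>: "fa_measure M \<phi>" "\<forall>A\<in>M. \<phi> A \<le> \<omega> A" "\<forall>A\<in>M \<inter> M2. \<phi> A = \<mu>2 (A \<inter> E)"
    using amalgamation_share[OF M M2 \<omega> \<mu>2 agree E] by blast
  note share = M M2 \<omega> \<mu>2 agree interp E \<phi>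
  have bounds: "\<forall>A\<in>M. 0 \<le> \<phi> A \<and> \<phi> A \<le> \<omega> A" and "additive M \<phi>"
    using \<phi> unfolding fa_measure_def by blast+
  obtain \<omega>' where \<omega>': "fa_measure (adjoin M E) \<omega>'" "\<forall>A\<in>M. \<omega>' A = \<omega> A"
    and val: "\<And>A B. A \<in> M \<Longrightarrow> B \<in> M \<Longrightarrow> \<omega>' ((A \<inter> E) \<union> (B - E)) = \<phi> A + (\<omega> B - \<phi> B)"
    using M.fa_measure_adjoin[OF M2.sets_into_space[OF E] \<omega> \<open>additive M \<phi>\<close> bounds
        amalgamation_share_null_full[OF share]] by blast
  have "\<omega>' H = \<mu>2 H" if "H \<in> adjoin M E \<inter> M2" for H
  proof -
    have "H \<in> adjoin M E" "H \<in> M2"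
      using that by blast+
    then obtain A B where AB: "A \<in> M" "B \<in> M" "H = (A \<inter> E) \<union> (B - E)"
      by (elim adjoinE)
    have "A \<inter> E = H \<inter> E" "B - E = H - E"
      using AB by blast+
    then have traces: "A \<inter> E \<in> M2" "B - E \<in> M2"
      using M2.Int[OF \<open>H \<in> M2\<close> E] M2.Diff[OF \<open>H \<in> M2\<close> E] by simp_all
    have "\<omega>' H = \<phi> A + (\<omega> B - \<phi> B)"
      using val[OF AB(1,2)] AB(3) by simp
    also have "\<dots> = \<mu>2 (A \<inter> E) + \<mu>2 (B - E)"
      using amalgamation_share_inside[OF share AB(1) traces(1)]
        amalgamation_share_outside[OF share AB(2) traces(2)] by simp
    also have "\<dots> = \<mu>2 H"
    proof -
      have "(A \<inter> E) \<inter> (B - E) = {}"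
        by blast
      then show ?thesis
        using additiveD[of M2 \<mu>2, OF _ _ traces] \<mu>2 unfolding AB(3) fa_measure_def by simp
    qed
    finally show ?thesis .
  qed
  then show ?thesis
    using that \<omega>' by blast
qed

lemma interpolating_Union:
  assumes "\<forall>M\<in>\<M>. interpolating M M2"
  shows "interpolating (\<Union>\<M>) M2"
  unfolding interpolating_def
proof (intro ballI impI)
  fix A B
  assume "A \<in> \<Union>\<M>" "B \<in> M2" "A \<subseteq> B"
  then obtain M where "M \<in> \<M>" "A \<in> M"
    by blast
  then obtain C where "C \<in> M \<inter> M2" "A \<subseteq> C" "C \<subseteq> B"
    using interpolatingE[of M M2 A B] assms \<open>B \<in> M2\<close> \<open>A \<subseteq> B\<close> by blast
  then show "\<exists>C\<in>\<Union>\<M> \<inter> M2. A \<subseteq> C \<and> C \<subseteq> B"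
    using \<open>M \<in> \<M>\<close> by blast
qed

definition partial_amalgam ::
  "'a set \<Rightarrow> 'a set set \<Rightarrow> ('a set \<Rightarrow> real) \<Rightarrow> 'a set set \<Rightarrow> ('a set \<Rightarrow> real) \<Rightarrow> bool" where
  "partial_amalgam \<Omega> M2 \<mu>2 M \<omega> \<longleftrightarrow> algebra \<Omega> M \<and> fa_measure M \<omega> \<and> (\<forall>A\<in>M \<inter> M2. \<omega> A = \<mu>2 A)
     \<and> interpolating M M2"

lemma partial_amalgam_chain_glue:
  assumes C: "C \<noteq> {}" "extension_chain C" and amalgams: "\<forall>p\<in>C. partial_amalgam \<Omega> M2 \<mu>2 (fst p) (snd p)"
  shows "partial_amalgam \<Omega> M2 \<mu>2 (\<Union>(fst ` C)) (chain_glue C)"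
proof -
  have "\<forall>p\<in>C. algebra \<Omega> (fst p) \<and> fa_measure (fst p) (snd p)"
    using amalgams unfolding partial_amalgam_def by blast
  moreover have "\<forall>A\<in>\<Union>(fst ` C). A \<in> M2 \<longrightarrow> chain_glue C A = \<mu>2 A"
    using chain_glue_pointwise[OF C(2), of "\<lambda>A r. A \<in> M2 \<longrightarrow> r = \<mu>2 A"] amalgams
    unfolding partial_amalgam_def by blast
  moreover have "interpolating (\<Union>(fst ` C)) M2"
    using interpolating_Union amalgams unfolding partial_amalgam_def by blast
  ultimately show ?thesis
    using fa_measure_chain_glue[OF C] unfolding partial_amalgam_def by blast
qed

lemma partial_amalgam_adjoin:
  assumes \<omega>: "partial_amalgam \<Omega> M2 \<mu>2 M \<omega>" and M2: "algebra \<Omega> M2" and \<mu>2: "fa_measure M2 \<mu>2"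
    and E: "E \<in> M2"
  obtains \<omega>' where "partial_amalgam \<Omega> M2 \<mu>2 (adjoin M E) \<omega>'" "\<forall>A\<in>M. \<omega>' A = \<omega> A"
proof -
  have M: "algebra \<Omega> M" "fa_measure M \<omega>" "\<forall>A\<in>M \<inter> M2. \<omega> A = \<mu>2 A" "interpolating M M2"
    using \<omega> unfolding partial_amalgam_def by blast+
  obtain \<omega>' where \<omega>': "fa_measure (adjoin M E) \<omega>'" "\<forall>A\<in>M. \<omega>' A = \<omega> A"
    "\<forall>H\<in>adjoin M E \<inter> M2. \<omega>' H = \<mu>2 H"
    using amalgamation_step[OF M(1) M2 M(2) \<mu>2 M(3,4) E] by blast
  have "E \<subseteq> \<Omega>"
    using M2 E unfolding algebra_iff_Int by blast
  then have "partial_amalgam \<Omega> M2 \<mu>2 (adjoin M E) \<omega>'"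
    using algebra.algebra_adjoin[OF M(1)] \<omega>'(1,3) interpolating_adjoin[OF M(1) M2 M(4) E]
    unfolding partial_amalgam_def by blast
  then show ?thesis
    using \<omega>'(2) by (rule that)
qed

theorem fa_measure_amalgamation:
  assumes N: "algebra \<Omega> N" and M1: "algebra \<Omega> M1" "M1 \<subseteq> N" and M2: "algebra \<Omega> M2" "M2 \<subseteq> N"
    and \<mu>1: "fa_measure M1 \<mu>1" and \<mu>2: "fa_measure M2 \<mu>2"
    and agree: "\<forall>A\<in>M1 \<inter> M2. \<mu>1 A = \<mu>2 A" and interp: "interpolating M1 M2"
  obtains \<omega> where "fa_measure N \<omega>" "\<forall>A\<in>M1. \<omega> A = \<mu>1 A" "\<forall>A\<in>M2. \<omega> A = \<mu>2 A"
proof -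
  interpret N: algebra \<Omega> N
    by (fact N)
  obtain M \<omega> where M: "partial_amalgam \<Omega> M2 \<mu>2 M \<omega>" "M \<subseteq> N" "M2 \<subseteq> M" "extended_by (M1, \<mu>1) (M, \<omega>)"
  proof (rule zorn_extension[of "partial_amalgam \<Omega> M2 \<mu>2" M1 \<mu>1 N M2])
    show "partial_amalgam \<Omega> M2 \<mu>2 M1 \<mu>1" "M1 \<subseteq> N"
      using M1 \<mu>1 agree interp unfolding partial_amalgam_def by auto
  next
    fix M \<omega> E
    assume amalgam: "partial_amalgam \<Omega> M2 \<mu>2 M \<omega>" and "M \<subseteq> N" "E \<in> M2"
    obtain \<omega>' where "partial_amalgam \<Omega> M2 \<mu>2 (adjoin M E) \<omega>'" "\<forall>A\<in>M. \<omega>' A = \<omega> A"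
      using partial_amalgam_adjoin[OF amalgam M2(1) \<mu>2 \<open>E \<in> M2\<close>] by blast
    moreover have "E \<in> N" "algebra \<Omega> M"
      using M2(2) \<open>E \<in> M2\<close> amalgam unfolding partial_amalgam_def by blast+
    ultimately show "\<exists>M' \<omega>'. partial_amalgam \<Omega> M2 \<mu>2 M' \<omega>' \<and> M' \<subseteq> N \<and> E \<in> M' \<and> extended_by (M, \<omega>) (M', \<omega>')"
      using N.adjoin_within[OF \<open>algebra \<Omega> M\<close> \<open>M \<subseteq> N\<close> \<open>E \<in> N\<close>] unfolding extended_by_def
      by (intro exI[of _ "adjoin M E"] exI) auto
  next
    show "partial_amalgam \<Omega> M2 \<mu>2 (\<Union>(fst ` C)) (chain_glue C)"
      if "C \<noteq> {}" "extension_chain C" "\<forall>p\<in>C. partial_amalgam \<Omega> M2 \<mu>2 (fst p) (snd p) \<and> fst p \<subseteq> N" for C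
      using partial_amalgam_chain_glue[OF that(1,2)] that(3) by blast
  qed
  then have "algebra \<Omega> M" "fa_measure M \<omega>" and on_M2: "\<forall>A\<in>M \<inter> M2. \<omega> A = \<mu>2 A"
    unfolding partial_amalgam_def by blast+
  then obtain \<omega>' where \<omega>': "fa_measure N \<omega>'" "\<forall>A\<in>M. \<omega>' A = \<omega> A"
    using fa_measure_extension[OF N _ \<open>M \<subseteq> N\<close>] by blast
  have "\<forall>A\<in>M1. \<omega>' A = \<mu>1 A"
    using \<omega>'(2) M(4) unfolding extended_by_def by auto
  moreover have "\<forall>A\<in>M2. \<omega>' A = \<mu>2 A"
    using \<omega>'(2) on_M2 M(3) by auto
  ultimately show ?thesis
    by (rule that[OF \<omega>'(1)])
qed

section \<open>Definable sets\<close>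

lemma evt_cong: "\<forall>i\<in>tvars t. e i = e' i \<Longrightarrow> evt fn e t = evt fn e' t"
proof (induction t)
  case (Fn f ts)
  then have "map (evt fn e) ts = map (evt fn e') ts"
    by auto
  then show ?case
    by (simp del: map_eq_conv)
qed auto

lemma sat_cong: "\<forall>i\<in>fv \<phi>. e i = e' i \<Longrightarrow> sat U rel fn e \<phi> = sat U rel fn e' \<phi>"
proof (induction \<phi> arbitrary: e e')
  case (Eq s t)
  then show ?case
    using evt_cong[of s e e' fn] evt_cong[of t e e' fn] by simp
next
  case (Rl r ts)
  then have "map (evt fn e) ts = map (evt fn e') ts"
    using evt_cong[of _ e e' fn] by auto
  then show ?case
    by (simp del: map_eq_conv)
next
  case (Conj p q)
  have "sat U rel fn e p = sat U rel fn e' p" "sat U rel fn e q = sat U rel fn e' q"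
    using Conj.IH[of e e'] Conj.prems by auto
  then show ?case
    by simp
next
  case (Ex i p)
  have "\<forall>j\<in>fv p. (e(i := a)) j = (e'(i := a)) j" for a
    using Ex.prems by auto
  then have "sat U rel fn (e(i := a)) p = sat U rel fn (e'(i := a)) p" for a
    using Ex.IH by blast
  then show ?case
    by simp
qed auto

fun rename_trm :: "(nat \<Rightarrow> nat) \<Rightarrow> ('f, 'a) trm \<Rightarrow> ('f, 'a) trm" where
  "rename_trm \<sigma> (Var i) = Var (\<sigma> i)"
| "rename_trm \<sigma> (Par a) = Par a"
| "rename_trm \<sigma> (Fn f ts) = Fn f (map (rename_trm \<sigma>) ts)"

fun rename :: "(nat \<Rightarrow> nat) \<Rightarrow> ('r, 'f, 'a) fm \<Rightarrow> ('r, 'f, 'a) fm" where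
  "rename \<sigma> (Eq s t) = Eq (rename_trm \<sigma> s) (rename_trm \<sigma> t)"
| "rename \<sigma> (Rl r ts) = Rl r (map (rename_trm \<sigma>) ts)"
| "rename \<sigma> (Neg p) = Neg (rename \<sigma> p)"
| "rename \<sigma> (Conj p q) = Conj (rename \<sigma> p) (rename \<sigma> q)"
| "rename \<sigma> (Ex i p) = Ex (\<sigma> i) (rename \<sigma> p)"

lemma evt_rename_trm: "evt fn e (rename_trm \<sigma> t) = evt fn (\<lambda>i. e (\<sigma> i)) t"
proof (induction t)
  case (Fn f ts)
  then have "map (evt fn e \<circ> rename_trm \<sigma>) ts = map (evt fn (\<lambda>i. e (\<sigma> i))) ts"
    by auto
  then show ?case
    by (simp del: map_eq_conv)
qed auto

lemma tvars_rename_trm: "tvars (rename_trm \<sigma> t) = \<sigma> ` tvars t"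
  by (induction t) auto

lemma params_rename: "params (rename \<sigma> \<phi>) = params \<phi>"
proof -
  have "tparams (rename_trm \<sigma> t) = tparams t" for t :: "('f, 'a) trm"
    by (induction t) auto
  then show ?thesis
    by (induction \<phi>) auto
qed

lemma fv_rename: "inj \<sigma> \<Longrightarrow> fv (rename \<sigma> \<phi>) = \<sigma> ` fv \<phi>"
  by (induction \<phi>) (auto simp: tvars_rename_trm inj_eq)

lemma sat_rename: "inj \<sigma> \<Longrightarrow> sat U rel fn e (rename \<sigma> \<phi>) = sat U rel fn (\<lambda>i. e (\<sigma> i)) \<phi>"
proof (induction \<phi> arbitrary: e)
  case (Rl r ts)
  have "map (evt fn e \<circ> rename_trm \<sigma>) ts = map (evt fn (\<lambda>i. e (\<sigma> i))) ts"
    by (auto simp: evt_rename_trm)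
  then show ?case
    by (simp del: map_eq_conv)
next
  case (Ex i p)
  have "(\<lambda>j. (e(\<sigma> i := a)) (\<sigma> j)) = (\<lambda>j. e (\<sigma> j))(i := a)" for a
    using Ex.prems by (auto simp: fun_eq_iff inj_eq)
  then show ?case
    using Ex by simp
qed (simp_all add: evt_rename_trm)

fun exists_vars :: "nat list \<Rightarrow> ('r, 'f, 'a) fm \<Rightarrow> ('r, 'f, 'a) fm" where
  "exists_vars [] \<phi> = \<phi>"
| "exists_vars (i # is) \<phi> = Ex i (exists_vars is \<phi>)"

lemma fv_exists_vars: "fv (exists_vars vs \<phi>) = fv \<phi> - set vs"
  by (induction vs) auto

lemma params_exists_vars: "params (exists_vars vs \<phi>) = params \<phi>"
  by (induction vs) auto

lemma sat_exists_vars: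
  "sat U rel fn e (exists_vars [k..<k+l] \<phi>) \<longleftrightarrow>
     (\<exists>u\<in>tuples U l. sat U rel fn (\<lambda>i. if k \<le> i \<and> i < k + l then u ! (i - k) else e i) \<phi>)"
proof (induction l arbitrary: k e)
  case 0
  have "(\<lambda>i. if k \<le> i \<and> i < k + 0 then u ! (i - k) else e i) = e" for u :: "'a list"
    by (rule ext) auto
  then show ?case
    by (simp add: tuples_def)
next
  case (Suc l)
  have upt: "[k..<k + Suc l] = k # [Suc k..<Suc k + l]"
    by (simp add: upt_rec)
  have env: "(\<lambda>i. if Suc k \<le> i \<and> i < Suc k + l then u ! (i - Suc k) else (e(k := a)) i)
      = (\<lambda>i. if k \<le> i \<and> i < k + Suc l then (a # u) ! (i - k) else e i)" for a u
  proof
    fix i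
    show "(if Suc k \<le> i \<and> i < Suc k + l then u ! (i - Suc k) else (e(k := a)) i)
      = (if k \<le> i \<and> i < k + Suc l then (a # u) ! (i - k) else e i)"
      by (cases "i = k"; cases "Suc k \<le> i") (auto simp: Suc_diff_Suc[symmetric] nth_Cons')
  qed
  have tuples_Suc: "(\<exists>u\<in>tuples U (Suc l). P u) \<longleftrightarrow> (\<exists>a\<in>U. \<exists>u\<in>tuples U l. P (a # u))" for P
  proof
    assume "\<exists>u\<in>tuples U (Suc l). P u"
    then obtain w where w: "w \<in> tuples U (Suc l)" "P w"
      by blast
    then obtain a u where "w = a # u"
      unfolding tuples_def by (cases w) auto
    then show "\<exists>a\<in>U. \<exists>u\<in>tuples U l. P (a # u)"
      using w unfolding tuples_def by auto
  next
    assume "\<exists>a\<in>U. \<exists>u\<in>tuples U l. P (a # u)"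
    then show "\<exists>u\<in>tuples U (Suc l). P u"
      unfolding tuples_def by fastforce
  qed
  show ?case
    by (simp only: upt exists_vars.simps sat.simps Suc.IH env tuples_Suc)
qed

lemma LL_subset_tuples: "D \<in> LL U rel fn C k \<Longrightarrow> D \<subseteq> tuples U k"
  unfolding LL_def dset_def by blast

lemma LL_mono: "C \<subseteq> C' \<Longrightarrow> LL U rel fn C k \<subseteq> LL U rel fn C' k"
  unfolding LL_def by blast

lemma algebra_LL:
  fixes rel :: "'r \<Rightarrow> 'a list \<Rightarrow> bool" and fn :: "'f \<Rightarrow> 'a list \<Rightarrow> 'a"
  shows "algebra (tuples U k) (LL U rel fn C k)"
  unfolding algebra_iff_Int
proof (intro conjI ballI)
  show "LL U rel fn C k \<subseteq> Pow (tuples U k)"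
    using LL_subset_tuples by blast
  define F :: "('r, 'f, 'a) fm" where "F = Ex 0 (Neg (Eq (Var 0) (Var 0)))"
  have "dset U rel fn k F = {}" "params F \<subseteq> C" "fv F \<subseteq> {..<k}"
    unfolding dset_def F_def by auto
  then show "{} \<in> LL U rel fn C k"
    unfolding LL_def by blast
next
  fix X
  assume "X \<in> LL U rel fn C k"
  then obtain \<phi> where \<phi>: "X = dset U rel fn k \<phi>" "params \<phi> \<subseteq> C" "fv \<phi> \<subseteq> {..<k}"
    unfolding LL_def by blast
  then have "tuples U k - X = dset U rel fn k (Neg \<phi>)"
    unfolding dset_def by auto
  then show "tuples U k - X \<in> LL U rel fn C k"
    using \<phi> unfolding LL_def by fastforce
next
  fix X Y
  assume "X \<in> LL U rel fn C k" "Y \<in> LL U rel fn C k"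
  then obtain \<phi> \<psi> where \<phi>: "X = dset U rel fn k \<phi>" "params \<phi> \<subseteq> C" "fv \<phi> \<subseteq> {..<k}"
    and \<psi>: "Y = dset U rel fn k \<psi>" "params \<psi> \<subseteq> C" "fv \<psi> \<subseteq> {..<k}"
    unfolding LL_def by blast
  then have "X \<inter> Y = dset U rel fn k (Conj \<phi> \<psi>)"
    unfolding dset_def by auto
  then show "X \<inter> Y \<in> LL U rel fn C k"
    using \<phi> \<psi> unfolding LL_def by fastforce
qed

lemma LL_reindex:
  assumes D: "D \<in> LL U rel fn C k" and \<sigma>: "inj \<sigma>" "\<sigma> ` {..<k} \<subseteq> {..<N}"
  shows "tuples U N \<inter> (\<lambda>v. map (\<lambda>i. v ! \<sigma> i) [0..<k]) -` D \<in> LL U rel fn C N"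
proof -
  obtain \<phi> where \<phi>: "D = dset U rel fn k \<phi>" "params \<phi> \<subseteq> C" "fv \<phi> \<subseteq> {..<k}"
    using D unfolding LL_def by blast
  have "map (\<lambda>i. v ! \<sigma> i) [0..<k] \<in> D \<longleftrightarrow> sat U rel fn (\<lambda>i. v ! i) (rename \<sigma> \<phi>)"
    if "v \<in> tuples U N" for v
  proof -
    have "v ! \<sigma> i \<in> U" if "i < k" for i
      using \<sigma>(2) that \<open>v \<in> tuples U N\<close> nth_mem unfolding tuples_def by blast
    then have "map (\<lambda>i. v ! \<sigma> i) [0..<k] \<in> tuples U k"
      unfolding tuples_def by auto
    moreover have "sat U rel fn (\<lambda>i. map (\<lambda>i. v ! \<sigma> i) [0..<k] ! i) \<phi> = sat U rel fn (\<lambda>i. v ! \<sigma> i) \<phi>"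
      using \<phi>(3) by (intro sat_cong) auto
    ultimately show ?thesis
      unfolding \<phi>(1) dset_def by (simp add: sat_rename[OF \<sigma>(1)])
  qed
  then have "tuples U N \<inter> (\<lambda>v. map (\<lambda>i. v ! \<sigma> i) [0..<k]) -` D = dset U rel fn N (rename \<sigma> \<phi>)"
    unfolding dset_def by blast
  moreover have "fv (rename \<sigma> \<phi>) \<subseteq> {..<N}"
    using fv_rename[OF \<sigma>(1)] \<phi>(3) \<sigma>(2) by blast
  ultimately show ?thesis
    using \<phi>(2) params_rename unfolding LL_def by fastforce
qed

lemma take_eq_map_nth: "n \<le> length v \<Longrightarrow> take n v = map (\<lambda>i. v ! i) [0..<n]"
  by (rule nth_equalityI) auto

lemma drop_eq_map_nth: "drop n v = map (\<lambda>i. v ! (i + n)) [0..<length v - n]"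
  by (rule nth_equalityI) (auto simp: add.commute)

lemma ext_x_LL:
  assumes "D \<in> LL U rel fn C n"
  shows "ext_x U n m D \<in> LL U rel fn C (n + m)"
proof -
  have "ext_x U n m D = tuples U (n + m) \<inter> (\<lambda>v. map (\<lambda>i. v ! id i) [0..<n]) -` D"
    unfolding ext_x_def tuples_def by (auto simp: take_eq_map_nth)
  then show ?thesis
    using LL_reindex[OF assms, of id "n + m"] by simp
qed

lemma ext_y_LL:
  assumes "D \<in> LL U rel fn C m"
  shows "ext_y U n m D \<in> LL U rel fn C (n + m)"
proof -
  have "ext_y U n m D = tuples U (n + m) \<inter> (\<lambda>v. map (\<lambda>i. v ! (i + n)) [0..<m]) -` D"
    unfolding ext_y_def tuples_def by (auto simp: drop_eq_map_nth)
  moreover have "inj (\<lambda>i::nat. i + n)" "(\<lambda>i. i + n) ` {..<m} \<subseteq> {..<n + m}"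
    by (auto simp: inj_on_def)
  ultimately show ?thesis
    using LL_reindex[OF assms, of "\<lambda>i. i + n" "n + m"] by simp
qed

lemma append_tuples: "w @ u \<in> tuples U (n + m) \<longleftrightarrow> w \<in> tuples U n \<and> u \<in> tuples U m"
  if "length w = n"
  using that unfolding tuples_def by auto

lemma take_image_tuples:
  assumes "D \<subseteq> tuples U (n + m)"
  shows "take n ` D = {w \<in> tuples U n. \<exists>u\<in>tuples U m. w @ u \<in> D}"
proof (intro equalityI subsetI)
  fix w
  assume "w \<in> take n ` D"
  then obtain v where "v \<in> D" "w = take n v"
    by blast
  moreover have "v = take n v @ drop n v" "length (take n v) = n"
    using assms \<open>v \<in> D\<close> unfolding tuples_def by auto
  ultimately show "w \<in> {w \<in> tuples U n. \<exists>u\<in>tuples U m. w @ u \<in> D}"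
    using assms append_tuples by (metis (mono_tags, lifting) mem_Collect_eq subsetD)
next
  fix w
  assume "w \<in> {w \<in> tuples U n. \<exists>u\<in>tuples U m. w @ u \<in> D}"
  then obtain u where "w \<in> tuples U n" "w @ u \<in> D"
    by blast
  moreover have "take n (w @ u) = w"
    using \<open>w \<in> tuples U n\<close> unfolding tuples_def by simp
  ultimately show "w \<in> take n ` D"
    by (metis image_eqI)
qed

lemma LL_take_image:
  assumes "D \<in> LL U rel fn C (n + m)"
  shows "take n ` D \<in> LL U rel fn C n"
proof -
  obtain \<phi> where \<phi>: "D = dset U rel fn (n + m) \<phi>" "params \<phi> \<subseteq> C" "fv \<phi> \<subseteq> {..<n + m}"
    using assms unfolding LL_def by blast
  define \<psi> where "\<psi> = exists_vars [n..<n+m] \<phi>"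
  have "w @ u \<in> D \<longleftrightarrow> sat U rel fn (\<lambda>i. if n \<le> i \<and> i < n + m then u ! (i - n) else w ! i) \<phi>"
    if "w \<in> tuples U n" "u \<in> tuples U m" for w u
  proof -
    have "length w = n"
      using that unfolding tuples_def by simp
    then have "sat U rel fn (\<lambda>i. if n \<le> i \<and> i < n + m then u ! (i - n) else w ! i) \<phi>
        = sat U rel fn (\<lambda>i. (w @ u) ! i) \<phi>"
      using \<phi>(3) by (intro sat_cong) (auto simp: nth_append)
    then show ?thesis
      using that append_tuples[OF \<open>length w = n\<close>] unfolding \<phi>(1) dset_def by simp
  qed
  then have "take n ` D = dset U rel fn n \<psi>"
    unfolding take_image_tuples[OF LL_subset_tuples[OF assms]] dset_def \<psi>_def sat_exists_vars
    by blast
  moreover have "fv \<psi> \<subseteq> {..<n}" "params \<psi> \<subseteq> C"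
    unfolding \<psi>_def fv_exists_vars params_exists_vars using \<phi>(2,3) by auto
  ultimately show ?thesis
    unfolding LL_def by blast
qed

lemma swap_eq_map_nth:
  assumes "length u = m + n"
  shows "drop m u @ take m u
    = map (\<lambda>i. u ! (if i < n then i + m else if i < n + m then i - n else i)) [0..<n + m]"
  using assms by (intro nth_equalityI) (auto simp: nth_append add.commute)

lemma LL_drop_image:
  assumes D: "D \<in> LL U rel fn C (n + m)"
  shows "drop n ` D \<in> LL U rel fn C m"
proof -
  define \<sigma> where "\<sigma> i = (if i < n then i + m else if i < n + m then i - n else i)" for i
  define D' where "D' = tuples U (m + n) \<inter> (\<lambda>v. map (\<lambda>i. v ! \<sigma> i) [0..<n + m]) -` D"
  have "inj \<sigma>" "\<sigma> ` {..<n + m} \<subseteq> {..<m + n}"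
    unfolding \<sigma>_def inj_def by (auto split: if_splits)
  then have "D' \<in> LL U rel fn C (m + n)"
    unfolding D'_def using LL_reindex[OF D] by blast
  moreover have "drop n ` D = take m ` D'"
  proof (intro equalityI subsetI)
    fix w
    assume "w \<in> drop n ` D"
    then obtain v where v: "v \<in> D" "w = drop n v"
      by blast
    then have "v \<in> tuples U (n + m)"
      using LL_subset_tuples[OF D] by blast
    then have "drop n v @ take n v \<in> D'" "take m (drop n v @ take n v) = w"
      unfolding D'_def \<sigma>_def using v swap_eq_map_nth[of "drop n v @ take n v" m n]
      by (auto simp: tuples_def dest: in_set_takeD in_set_dropD)
    then show "w \<in> take m ` D'"
      by (metis image_eqI)
  next
    fix w
    assume "w \<in> take m ` D'"
    then obtain u where u: "u \<in> D'" "w = take m u"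
      by blast
    then have "length u = m + n"
      unfolding D'_def tuples_def by simp
    then have "drop m u @ take m u \<in> D"
      using u swap_eq_map_nth[of u m n] unfolding D'_def \<sigma>_def by auto
    moreover have "drop n (drop m u @ take m u) = w"
      using u \<open>length u = m + n\<close> by simp
    ultimately show "w \<in> drop n ` D"
      by (metis image_eqI)
  qed
  ultimately show ?thesis
    using LL_take_image by simp
qed

section \<open>Keisler measures\<close>

lemma MM_iff:
  "\<mu> \<in> MM U rel fn C k \<longleftrightarrow> fa_measure (LL U rel fn C k) \<mu> \<and> \<mu> (tuples U k) = 1
     \<and> (\<forall>D. D \<notin> LL U rel fn C k \<longrightarrow> \<mu> D = 0)"
  unfolding MM_def fa_prob_def fa_measure_def additive_def mem_Collect_eq by blast

lemma restr_restr: "M \<subseteq> N \<Longrightarrow> restr M (restr N f) = restr M f"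
  unfolding restr_def by (intro ext) auto

lemma restr_eq_mono: "M \<subseteq> N \<Longrightarrow> restr N f = restr N g \<Longrightarrow> restr M f = restr M g"
  by (metis restr_restr)

lemma restr_in_MM:
  assumes \<omega>: "fa_measure (LL U rel fn C k) \<omega>" "\<omega> (tuples U k) = 1"
  shows "restr (LL U rel fn C k) \<omega> \<in> MM U rel fn C k"
  unfolding MM_iff
proof (intro conjI allI impI)
  interpret algebra "tuples U k" "LL U rel fn C k"
    by (rule algebra_LL)
  have "additive (LL U rel fn C k) (restr (LL U rel fn C k) \<omega>)"
    using \<omega>(1) Un unfolding additive_def fa_measure_def restr_def by simp
  then show "fa_measure (LL U rel fn C k) (restr (LL U rel fn C k) \<omega>)"
    using \<omega>(1) unfolding fa_measure_def restr_def by simp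
  show "restr (LL U rel fn C k) \<omega> (tuples U k) = 1"
    using \<omega>(2) top unfolding restr_def by simp
qed (simp add: restr_def)

lemma MM_restr:
  assumes "\<omega> \<in> MM U rel fn U k" "C \<subseteq> U"
  shows "restr (LL U rel fn C k) \<omega> \<in> MM U rel fn C k"
proof (rule restr_in_MM)
  show "fa_measure (LL U rel fn C k) \<omega>"
    using assms(1) fa_measure_subset[OF _ LL_mono[OF assms(2)]] unfolding MM_iff by blast
  show "\<omega> (tuples U k) = 1"
    using assms unfolding MM_iff by blast
qed

lemma restr_extension_MM:
  assumes C: "C \<subseteq> U" and \<theta>: "\<theta> \<in> MM U rel fn C N"
    and \<omega>: "fa_measure (LL U rel fn U N) \<omega>" "\<forall>X\<in>LL U rel fn C N. \<omega> X = \<theta> X"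
  shows "restr (LL U rel fn U N) \<omega> \<in> MM U rel fn U N"
    "restr (LL U rel fn C N) (restr (LL U rel fn U N) \<omega>) = \<theta>"
proof -
  have "tuples U N \<in> LL U rel fn C N"
    using algebra.top[OF algebra_LL] .
  then show "restr (LL U rel fn U N) \<omega> \<in> MM U rel fn U N"
    using restr_in_MM[OF \<omega>(1)] \<omega>(2) \<theta> unfolding MM_iff by simp
  have "restr (LL U rel fn C N) (restr (LL U rel fn U N) \<omega>) = restr (LL U rel fn C N) \<omega>"
    by (rule restr_restr[OF LL_mono[OF C]])
  also have "\<dots> = \<theta>"
    using \<omega>(2) \<theta> unfolding restr_def MM_iff by (intro ext) simp
  finally show "restr (LL U rel fn C N) (restr (LL U rel fn U N) \<omega>) = \<theta>" .
qed

lemma ext_x_vimage: "ext_x U n m D = tuples U (n + m) \<inter> take n -` D"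
  unfolding ext_x_def by auto

lemma ext_y_vimage: "ext_y U n m D = tuples U (n + m) \<inter> drop n -` D"
  unfolding ext_y_def by auto

lemma pi_x_restr:
  assumes "C \<subseteq> U"
  shows "pi_x U rel fn C n m (restr (LL U rel fn C (n + m)) \<omega>)
    = restr (LL U rel fn C n) (pi_x U rel fn U n m \<omega>)"
proof
  fix D
  have "D \<in> LL U rel fn U n" "ext_x U n m D \<in> LL U rel fn C (n + m)" if "D \<in> LL U rel fn C n"
    using that LL_mono[OF assms] ext_x_LL by blast+
  then show "pi_x U rel fn C n m (restr (LL U rel fn C (n + m)) \<omega>) D
    = restr (LL U rel fn C n) (pi_x U rel fn U n m \<omega>) D"
    unfolding pi_x_def restr_def by simp
qed

lemma pi_y_restr:
  assumes "C \<subseteq> U"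
  shows "pi_y U rel fn C n m (restr (LL U rel fn C (n + m)) \<omega>)
    = restr (LL U rel fn C m) (pi_y U rel fn U n m \<omega>)"
proof
  fix D
  have "D \<in> LL U rel fn U m" "ext_y U n m D \<in> LL U rel fn C (n + m)" if "D \<in> LL U rel fn C m"
    using that LL_mono[OF assms] ext_y_LL by blast+
  then show "pi_y U rel fn C n m (restr (LL U rel fn C (n + m)) \<omega>) D
    = restr (LL U rel fn C m) (pi_y U rel fn U n m \<omega>) D"
    unfolding pi_y_def restr_def by simp
qed

lemma pi_x_MM:
  assumes \<omega>: "\<omega> \<in> MM U rel fn U (n + m)"
  shows "pi_x U rel fn U n m \<omega> \<in> MM U rel fn U n"
  unfolding MM_iff fa_measure_def
proof (intro conjI ballI allI impI)
  interpret algebra "tuples U n" "LL U rel fn U n"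
    by (rule algebra_LL)
  have \<omega>': "additive (LL U rel fn U (n + m)) \<omega>" "\<forall>A\<in>LL U rel fn U (n + m). 0 \<le> \<omega> A"
    using \<omega> unfolding MM_iff fa_measure_def by auto
  show "additive (LL U rel fn U n) (pi_x U rel fn U n m \<omega>)"
    unfolding additive_def
  proof (intro ballI impI)
    fix D1 D2
    assume D: "D1 \<in> LL U rel fn U n" "D2 \<in> LL U rel fn U n" "D1 \<inter> D2 = {}"
    have "ext_x U n m (D1 \<union> D2) = ext_x U n m D1 \<union> ext_x U n m D2"
      "ext_x U n m D1 \<inter> ext_x U n m D2 = {}"
      using D(3) unfolding ext_x_def by auto
    moreover have "D1 \<union> D2 \<in> LL U rel fn U n"
      using D by blast
    ultimately show "pi_x U rel fn U n m \<omega> (D1 \<union> D2) = pi_x U rel fn U n m \<omega> D1 + pi_x U rel fn U n m \<omega> D2"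
      using D additiveD[OF \<omega>'(1)] ext_x_LL[OF D(1)] ext_x_LL[OF D(2)] unfolding pi_x_def by simp
  qed
  show "0 \<le> pi_x U rel fn U n m \<omega> D" if "D \<in> LL U rel fn U n" for D
    using \<omega>'(2) ext_x_LL[OF that] unfolding pi_x_def by simp
  have "ext_x U n m (tuples U n) = tuples U (n + m)"
    unfolding ext_x_def tuples_def by (auto dest: in_set_takeD)
  then show "pi_x U rel fn U n m \<omega> (tuples U n) = 1"
    using \<omega> unfolding pi_x_def MM_iff by simp
qed (simp add: pi_x_def)

lemma take_tuples: "U \<noteq> {} \<Longrightarrow> take n ` tuples U (n + m) = tuples U n"
proof (intro equalityI subsetI)
  fix w
  assume "w \<in> take n ` tuples U (n + m)"
  then show "w \<in> tuples U n"
    unfolding tuples_def by (auto dest: in_set_takeD)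
next
  fix w
  assume "U \<noteq> {}" "w \<in> tuples U n"
  then obtain a where "a \<in> U"
    by blast
  then have "w @ replicate m a \<in> tuples U (n + m)" "take n (w @ replicate m a) = w"
    using \<open>w \<in> tuples U n\<close> unfolding tuples_def by auto
  then show "w \<in> take n ` tuples U (n + m)"
    by (metis image_eqI)
qed

lemma drop_tuples: "U \<noteq> {} \<Longrightarrow> drop n ` tuples U (n + m) = tuples U m"
proof (intro equalityI subsetI)
  fix w
  assume "w \<in> drop n ` tuples U (n + m)"
  then show "w \<in> tuples U m"
    unfolding tuples_def by (auto dest: in_set_dropD)
next
  fix w
  assume "U \<noteq> {}" "w \<in> tuples U m"
  then obtain a where "a \<in> U"
    by blast
  then have "replicate n a @ w \<in> tuples U (n + m)" "drop n (replicate n a @ w) = w"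
    using \<open>w \<in> tuples U m\<close> unfolding tuples_def by auto
  then show "w \<in> drop n ` tuples U (n + m)"
    by (metis image_eqI)
qed

lemma image_Int_vimage:
  assumes "t ` S = S'" "D \<subseteq> S'"
  shows "t ` (S \<inter> t -` D) = D"
proof
  show "D \<subseteq> t ` (S \<inter> t -` D)"
  proof
    fix d
    assume "d \<in> D"
    then obtain v where "v \<in> S" "d = t v"
      using assms by blast
    then show "d \<in> t ` (S \<inter> t -` D)"
      using \<open>d \<in> D\<close> by blast
  qed
qed blast

lemma algebra_vimage_image:
  assumes "algebra S' M'" "t ` S \<subseteq> S'"
  shows "algebra S ((\<lambda>D. S \<inter> t -` D) ` M')"
  unfolding algebra_iff_Int
proof (intro conjI ballI)
  interpret algebra S' M'
    by (fact assms(1))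
  show "(\<lambda>D. S \<inter> t -` D) ` M' \<subseteq> Pow S"
    by blast
  show "{} \<in> (\<lambda>D. S \<inter> t -` D) ` M'"
    using image_eqI[of "{}" "\<lambda>D. S \<inter> t -` D" "{}" M'] by simp
  show "S - X \<in> (\<lambda>D. S \<inter> t -` D) ` M'" if X: "X \<in> (\<lambda>D. S \<inter> t -` D) ` M'" for X
  proof -
    obtain D where "D \<in> M'" "X = S \<inter> t -` D"
      using X by blast
    then have "S - X = S \<inter> t -` (S' - D)"
      using assms(2) by blast
    then show ?thesis
      using compl_sets[OF \<open>D \<in> M'\<close>] by (rule image_eqI)
  qed
  show "X \<inter> Y \<in> (\<lambda>D. S \<inter> t -` D) ` M'"
    if XY: "X \<in> (\<lambda>D. S \<inter> t -` D) ` M'" "Y \<in> (\<lambda>D. S \<inter> t -` D) ` M'" for X Y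
  proof -
    obtain D E where "D \<in> M'" "X = S \<inter> t -` D" "E \<in> M'" "Y = S \<inter> t -` E"
      using XY by blast
    then have "X \<inter> Y = S \<inter> t -` (D \<inter> E)"
      by blast
    then show ?thesis
      using Int[OF \<open>D \<in> M'\<close> \<open>E \<in> M'\<close>] by (rule image_eqI)
  qed
qed

lemma fa_measure_vimage_image:
  assumes t: "t ` S = S'" and M': "algebra S' M'" and \<mu>: "fa_measure M' \<mu>"
  shows "fa_measure ((\<lambda>D. S \<inter> t -` D) ` M') (\<lambda>E. \<mu> (t ` E))"
proof -
  interpret algebra S' M'
    by (fact M')
  have img: "t ` (S \<inter> t -` D) = D" if "D \<in> M'" for D
    using image_Int_vimage[OF t sets_into_space[OF that]] .
  show ?thesis
    unfolding fa_measure_def additive_def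
  proof (intro conjI ballI impI)
    fix X Y
    assume "X \<in> (\<lambda>D. S \<inter> t -` D) ` M'" "Y \<in> (\<lambda>D. S \<inter> t -` D) ` M'" "X \<inter> Y = {}"
    then obtain D E where DE: "D \<in> M'" "X = S \<inter> t -` D" "E \<in> M'" "Y = S \<inter> t -` E"
      by blast
    have "t ` X = D" "t ` Y = E"
      using img DE by simp_all
    moreover have "D \<inter> E = {}"
    proof -
      have "X \<inter> Y = S \<inter> t -` (D \<inter> E)"
        using DE by blast
      then show ?thesis
        using img[OF Int[OF DE(1,3)]] \<open>X \<inter> Y = {}\<close> by simp
    qed
    ultimately show "\<mu> (t ` (X \<union> Y)) = \<mu> (t ` X) + \<mu> (t ` Y)"
      using additiveD[of M' \<mu> D E] \<mu> DE unfolding fa_measure_def by (simp add: image_Un)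
  next
    fix X
    assume "X \<in> (\<lambda>D. S \<inter> t -` D) ` M'"
    then obtain D where "D \<in> M'" "X = S \<inter> t -` D"
      by blast
    then show "0 \<le> \<mu> (t ` X)"
      using \<mu> img unfolding fa_measure_def by simp
  qed
qed

text \<open>This is where definability of projections enters: a definable \<open>X\<close> inside the pullback of
\<open>D\<close> lies inside the pullback of its own projection \<open>t ` X\<close>, which is definable over the same
parameters.\<close>

lemma interpolating_LL_vimage:
  assumes C: "C \<subseteq> U" and t: "t ` tuples U N = tuples U k"
    and image: "\<And>D. D \<in> LL U rel fn C N \<Longrightarrow> t ` D \<in> LL U rel fn C k"
    and vimage: "\<And>C' D. D \<in> LL U rel fn C' k \<Longrightarrow> tuples U N \<inter> t -` D \<in> LL U rel fn C' N"
  shows "interpolating (LL U rel fn C N) ((\<lambda>D. tuples U N \<inter> t -` D) ` LL U rel fn U k)"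
  unfolding interpolating_def
proof (intro ballI impI)
  fix X E
  assume X: "X \<in> LL U rel fn C N" and E: "E \<in> (\<lambda>D. tuples U N \<inter> t -` D) ` LL U rel fn U k"
    and "X \<subseteq> E"
  obtain D where D: "D \<in> LL U rel fn U k" "E = tuples U N \<inter> t -` D"
    using E by blast
  define F where "F = tuples U N \<inter> t -` (t ` X)"
  have "t ` X \<in> LL U rel fn C k"
    using image[OF X] .
  then have "F \<in> LL U rel fn C N"
    unfolding F_def by (rule vimage)
  moreover have "F \<in> (\<lambda>D. tuples U N \<inter> t -` D) ` LL U rel fn U k"
    unfolding F_def using LL_mono[OF C] \<open>t ` X \<in> LL U rel fn C k\<close> by blast
  moreover have "X \<subseteq> F"
    unfolding F_def using LL_subset_tuples[OF X] by blast
  moreover have "F \<subseteq> E"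
    unfolding F_def D(2) using \<open>X \<subseteq> E\<close> D(2) by blast
  ultimately show "\<exists>F\<in>LL U rel fn C N \<inter> (\<lambda>D. tuples U N \<inter> t -` D) ` LL U rel fn U k. X \<subseteq> F \<and> F \<subseteq> E"
    by blast
qed

lemma MM_amalgamation:
  assumes C: "C \<subseteq> U" and t: "t ` tuples U N = tuples U k"
    and image: "\<And>D. D \<in> LL U rel fn C N \<Longrightarrow> t ` D \<in> LL U rel fn C k"
    and vimage: "\<And>C' D. D \<in> LL U rel fn C' k \<Longrightarrow> tuples U N \<inter> t -` D \<in> LL U rel fn C' N"
    and \<theta>: "\<theta> \<in> MM U rel fn C N" and \<mu>: "\<mu> \<in> MM U rel fn U k"
    and agree: "\<forall>D\<in>LL U rel fn C k. \<theta> (tuples U N \<inter> t -` D) = \<mu> D"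
  obtains \<omega> where "\<omega> \<in> MM U rel fn U N" "restr (LL U rel fn C N) \<omega> = \<theta>"
    "\<forall>D\<in>LL U rel fn U k. \<omega> (tuples U N \<inter> t -` D) = \<mu> D"
proof -
  let ?S = "tuples U N"
  let ?M2 = "(\<lambda>D. ?S \<inter> t -` D) ` LL U rel fn U k"
  have img: "t ` (?S \<inter> t -` D) = D" if "D \<in> LL U rel fn U k" for D
    using image_Int_vimage[OF t LL_subset_tuples[OF that]] .
  have "algebra (tuples U k) (LL U rel fn U k)"
    by (rule algebra_LL)
  then have M2: "algebra ?S ?M2"
    using t by (intro algebra_vimage_image) auto
  have "?M2 \<subseteq> LL U rel fn U N"
    using vimage by blast
  have \<mu>2: "fa_measure ?M2 (\<lambda>E. \<mu> (t ` E))"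
    using fa_measure_vimage_image[OF t algebra_LL] \<mu> unfolding MM_iff by blast
  have \<theta>': "fa_measure (LL U rel fn C N) \<theta>"
    using \<theta> unfolding MM_iff by blast
  have agree': "\<forall>X\<in>LL U rel fn C N \<inter> ?M2. \<theta> X = \<mu> (t ` X)"
  proof
    fix X
    assume "X \<in> LL U rel fn C N \<inter> ?M2"
    then obtain D where X: "X \<in> LL U rel fn C N" "D \<in> LL U rel fn U k" "X = ?S \<inter> t -` D"
      by blast
    then have "t ` X = D"
      using img by blast
    moreover have "t ` X \<in> LL U rel fn C k"
      using image X(1) .
    ultimately show "\<theta> X = \<mu> (t ` X)"
      using agree X(3) by simp
  qed
  obtain \<omega> where \<omega>: "fa_measure (LL U rel fn U N) \<omega>" "\<forall>X\<in>LL U rel fn C N. \<omega> X = \<theta> X"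
    "\<forall>X\<in>?M2. \<omega> X = \<mu> (t ` X)"
    using fa_measure_amalgamation[OF algebra_LL algebra_LL LL_mono[OF C] M2 \<open>?M2 \<subseteq> LL U rel fn U N\<close>
        \<theta>' \<mu>2 agree' interpolating_LL_vimage[OF C t image vimage]] .
  have "\<forall>D\<in>LL U rel fn U k. restr (LL U rel fn U N) \<omega> (?S \<inter> t -` D) = \<mu> D"
  proof
    fix D
    assume "D \<in> LL U rel fn U k"
    then show "restr (LL U rel fn U N) \<omega> (?S \<inter> t -` D) = \<mu> D"
      using \<omega>(3) img vimage unfolding restr_def by simp
  qed
  then show ?thesis
    by (rule that[OF restr_extension_MM[OF C \<theta> \<omega>(1,2)]])
qed

lemma MM_amalgamation_x:
  assumes U: "U \<noteq> {}" and C: "C \<subseteq> U"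
    and \<theta>: "\<theta> \<in> MM U rel fn C (n + m)" and \<mu>: "\<mu> \<in> MM U rel fn U n"
    and marginal: "pi_x U rel fn C n m \<theta> = restr (LL U rel fn C n) \<mu>"
  obtains \<omega> where "\<omega> \<in> MM U rel fn U (n + m)" "restr (LL U rel fn C (n + m)) \<omega> = \<theta>"
    "pi_x U rel fn U n m \<omega> = \<mu>"
proof -
  have image: "\<And>D. D \<in> LL U rel fn C (n + m) \<Longrightarrow> take n ` D \<in> LL U rel fn C n"
    by (rule LL_take_image)
  have vimage: "\<And>C' D. D \<in> LL U rel fn C' n \<Longrightarrow> tuples U (n + m) \<inter> take n -` D \<in> LL U rel fn C' (n + m)"
    using ext_x_LL unfolding ext_x_vimage .
  have "\<forall>D\<in>LL U rel fn C n. \<theta> (tuples U (n + m) \<inter> take n -` D) = \<mu> D"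
  proof
    fix D
    assume "D \<in> LL U rel fn C n"
    then show "\<theta> (tuples U (n + m) \<inter> take n -` D) = \<mu> D"
      using fun_cong[OF marginal, of D] unfolding pi_x_def restr_def ext_x_vimage by simp
  qed
  then obtain \<omega> where \<omega>: "\<omega> \<in> MM U rel fn U (n + m)" "restr (LL U rel fn C (n + m)) \<omega> = \<theta>"
    and \<omega>_x: "\<forall>D\<in>LL U rel fn U n. \<omega> (tuples U (n + m) \<inter> take n -` D) = \<mu> D"
    using MM_amalgamation[OF C take_tuples[OF U] image vimage \<theta> \<mu>] by blast
  have "pi_x U rel fn U n m \<omega> = \<mu>"
    using \<omega>_x \<mu> unfolding pi_x_def ext_x_vimage MM_iff by (intro ext) simp
  then show ?thesis
    using that \<omega> by blast
qed

lemma MM_amalgamation_y: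
  assumes U: "U \<noteq> {}" and C: "C \<subseteq> U"
    and \<theta>: "\<theta> \<in> MM U rel fn C (n + m)" and \<nu>: "\<nu> \<in> MM U rel fn U m"
    and marginal: "pi_y U rel fn C n m \<theta> = restr (LL U rel fn C m) \<nu>"
  obtains \<omega> where "\<omega> \<in> MM U rel fn U (n + m)" "restr (LL U rel fn C (n + m)) \<omega> = \<theta>"
    "pi_y U rel fn U n m \<omega> = \<nu>"
proof -
  have image: "\<And>D. D \<in> LL U rel fn C (n + m) \<Longrightarrow> drop n ` D \<in> LL U rel fn C m"
    by (rule LL_drop_image)
  have vimage: "\<And>C' D. D \<in> LL U rel fn C' m \<Longrightarrow> tuples U (n + m) \<inter> drop n -` D \<in> LL U rel fn C' (n + m)"
    using ext_y_LL unfolding ext_y_vimage .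
  have "\<forall>D\<in>LL U rel fn C m. \<theta> (tuples U (n + m) \<inter> drop n -` D) = \<nu> D"
  proof
    fix D
    assume "D \<in> LL U rel fn C m"
    then show "\<theta> (tuples U (n + m) \<inter> drop n -` D) = \<nu> D"
      using fun_cong[OF marginal, of D] unfolding pi_y_def restr_def ext_y_vimage by simp
  qed
  then obtain \<omega> where \<omega>: "\<omega> \<in> MM U rel fn U (n + m)" "restr (LL U rel fn C (n + m)) \<omega> = \<theta>"
    and \<omega>_y: "\<forall>D\<in>LL U rel fn U m. \<omega> (tuples U (n + m) \<inter> drop n -` D) = \<nu> D"
    using MM_amalgamation[OF C drop_tuples[OF U] image vimage \<theta> \<nu>] by blast
  have "pi_y U rel fn U n m \<omega> = \<nu>"
    using \<omega>_y \<nu> unfolding pi_y_def ext_y_vimage MM_iff by (intro ext) simp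
  then show ?thesis
    using that \<omega> by blast
qed

section \<open>Transfer of smoothness\<close>

lemma smooth_over_if_E_above_over:
  assumes U: "U \<noteq> {}" and A: "A \<subseteq> U" and B: "B \<subseteq> U"
    and \<mu>: "\<mu> \<in> MM U rel fn U n" and \<nu>: "\<nu> \<in> MM U rel fn U m"
    and above: "E_above_over U rel fn A n m \<mu> \<nu>" and smooth: "smooth_over U rel fn B n \<mu>"
  shows "smooth_over U rel fn (A \<union> B) m \<nu>"
proof -
  let ?C = "A \<union> B"
  have C: "?C \<subseteq> U"
    using A B by blast
  obtain \<theta> where \<theta>: "\<theta> \<in> MM U rel fn A (n + m)" "pi_x U rel fn A n m \<theta> = restr (LL U rel fn A n) \<mu>"
    and determines: "\<And>\<omega>. \<omega> \<in> MM U rel fn U (n + m) \<Longrightarrow> restr (LL U rel fn A (n + m)) \<omega> = \<theta>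
      \<Longrightarrow> pi_x U rel fn U n m \<omega> = \<mu> \<Longrightarrow> pi_y U rel fn U n m \<omega> = \<nu>"
    using above unfolding E_above_over_def by blast
  obtain \<omega>1 where \<omega>1: "\<omega>1 \<in> MM U rel fn U (n + m)" "restr (LL U rel fn A (n + m)) \<omega>1 = \<theta>"
    "pi_x U rel fn U n m \<omega>1 = \<mu>"
    using MM_amalgamation_x[OF U A \<theta>(1) \<mu> \<theta>(2)] by blast
  have "\<nu>' = \<nu>"
    if \<nu>': "\<nu>' \<in> MM U rel fn U m" "restr (LL U rel fn ?C m) \<nu>' = restr (LL U rel fn ?C m) \<nu>" for \<nu>'
  proof -
    have "pi_y U rel fn ?C n m (restr (LL U rel fn ?C (n + m)) \<omega>1)
        = restr (LL U rel fn ?C m) (pi_y U rel fn U n m \<omega>1)"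
      by (rule pi_y_restr[OF C])
    also have "\<dots> = restr (LL U rel fn ?C m) \<nu>'"
      using determines[OF \<omega>1] \<nu>'(2) by simp
    finally obtain \<omega>2 where \<omega>2: "\<omega>2 \<in> MM U rel fn U (n + m)"
      "restr (LL U rel fn ?C (n + m)) \<omega>2 = restr (LL U rel fn ?C (n + m)) \<omega>1"
      "pi_y U rel fn U n m \<omega>2 = \<nu>'"
      using MM_amalgamation_y[OF U C MM_restr[OF \<omega>1(1) C] \<nu>'(1)] by blast
    have "restr (LL U rel fn ?C n) (pi_x U rel fn U n m \<omega>2)
        = pi_x U rel fn ?C n m (restr (LL U rel fn ?C (n + m)) \<omega>2)"
      by (rule pi_x_restr[OF C, symmetric])
    also have "\<dots> = pi_x U rel fn ?C n m (restr (LL U rel fn ?C (n + m)) \<omega>1)"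
      using \<omega>2(2) by simp
    also have "\<dots> = restr (LL U rel fn ?C n) (pi_x U rel fn U n m \<omega>1)"
      by (rule pi_x_restr[OF C])
    also have "\<dots> = restr (LL U rel fn ?C n) \<mu>"
      using \<omega>1(3) by simp
    finally have "pi_x U rel fn U n m \<omega>2 = \<mu>"
      using smooth pi_x_MM[OF \<omega>2(1)] restr_eq_mono[OF LL_mono] unfolding smooth_over_def by blast
    moreover have "restr (LL U rel fn A (n + m)) \<omega>2 = \<theta>"
      using restr_eq_mono[OF LL_mono \<omega>2(2)] \<omega>1(2) by blast
    ultimately show "\<nu>' = \<nu>"
      using determines[OF \<omega>2(1)] \<omega>2(3) by simp
  qed
  then show ?thesis
    using \<nu> unfolding smooth_over_def by blast
qed

lemma small_Un:
  assumes "monster \<kappa> U rel fn" "small \<kappa> U A" "small \<kappa> U B"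
  shows "small \<kappa> U (A \<union> B)"
proof -
  have \<kappa>: "Card_order \<kappa>" "(natLeq, \<kappa>) \<in> ordLeq"
    using assms(1) unfolding monster_def by auto
  have "\<not> finite (Field \<kappa>)"
  proof
    assume "finite (Field \<kappa>)"
    then have "(card_of (Field \<kappa>), natLeq) \<in> ordLess"
      using finite_iff_ordLess_natLeq by blast
    moreover have "(\<kappa>, card_of (Field \<kappa>)) \<in> ordIso"
      using card_of_Field_ordIso[OF \<kappa>(1)] ordIso_symmetric by blast
    ultimately have "(\<kappa>, natLeq) \<in> ordLess"
      using ordIso_ordLess_trans by blast
    then show False
      using \<kappa>(2) not_ordLess_ordLeq by blast
  qed
  then show ?thesis
    using assms(2,3) card_of_Un_ordLess_infinite_Field[OF _ \<kappa>(1)] unfolding small_def by blast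
qed

theorem proposition4p8:
  fixes \<kappa> :: "'k rel"
    and U :: "'a set"
    and rel :: "'r \<Rightarrow> 'a list \<Rightarrow> bool"
    and fn :: "'f \<Rightarrow> 'a list \<Rightarrow> 'a"
    and n m :: nat
    and \<mu> \<nu> :: "'a list set \<Rightarrow> real"
  assumes "monster \<kappa> U rel fn"
    and "\<mu> \<in> MM U rel fn U n"
    and "\<nu> \<in> MM U rel fn U m"
    and "E_above \<kappa> U rel fn n m \<mu> \<nu>"
    and "smooth \<kappa> U rel fn n \<mu>"
  shows "smooth \<kappa> U rel fn m \<nu>"
proof -
  have U: "U \<noteq> {}"
    using assms(1) unfolding monster_def is_structure_def by blast
  obtain A where A: "small \<kappa> U A" "E_above_over U rel fn A n m \<mu> \<nu>"
    using assms(4) unfolding E_above_def by blast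
  obtain B where B: "small \<kappa> U B" "smooth_over U rel fn B n \<mu>"
    using assms(5) unfolding smooth_def by blast
  have "smooth_over U rel fn (A \<union> B) m \<nu>"
    using smooth_over_if_E_above_over[OF U _ _ assms(2,3) A(2) B(2)] A(1) B(1)
    unfolding small_def by blast
  then show ?thesis
    unfolding smooth_def using small_Un[OF assms(1) A(1) B(1)] by blast
qed
end
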